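(* Let $X$ be an infinite dimensional Banach lattice. Then $\delta(X_U)=\delta(X)$ and $\sigma(X_L)=\sigma(X)$.
   Context: Banach lattices are real; disjoint means $|x|\wedge|y|=0$. Upper (resp. lower) $p$-estimate: there is $M$ with $\|\sum x_i\|\le M(\sum\|x_i\|^p)^{1/p}$ (resp. $(\sum\|x_i\|^p)^{1/p}\le M\|\sum x_i\|$) for all finite families of pairwise disjoint elements. $\delta(X):=\sup\{p\ge1:$ upper $p$-estimate$\}$, $\sigma(X):=\inf\{q\ge1:$ lower $q$-estimate$\}$. $\mathfrak B_n(X)$ is the set of $n$-tuples of pairwise disjoint norm-one elements of $X$. For $a\in\mathbb R^n$: $\|a\|_{X_U(n)}:=\sup\{\|\sum_{i=1}^n a_ix_i\|_X:(x_i)\in\mathfrak B_n(X)\}$; $\Phi_n(a):=\inf\{\|\sum_{i=1}^n a_ix_i\|_X:(x_i)\in\mathfrak B_n(X)\}$; $\|a\|_{X_L(n)}:=\inf\{\sum_{k\in F}\Phi_n(a^k): F\text{ finite}, a^k\in\mathbb R^n, a=\sum_{k\in F}a^k\}$. $X_U$ (resp. $X_L$) is the space of real sequences $a$ with $\|a\|_{X_U}:=\sup_n\|(a_i)_{i=1}^n\|_{X_U(n)}<\infty$ (resp. $\|a\|_{X_L}:=\sup_n\|(a_i)_{i=1}^n\|_{X_L(n)}<\infty$), regarded as Banach lattices with coordinate-wise order. *)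

theory Defs
  imports "HOL-Analysis.Analysis" "HOL-Library.Function_Algebras"
begin

definition lat_abs :: "'v::{lattice,uminus} \<Rightarrow> 'v" where
  "lat_abs x = sup x (- x)"

definition banach_lattice :: "'a::{banach,lattice} itself \<Rightarrow> bool" where
  "banach_lattice _ \<longleftrightarrow>
     (\<forall>x y z::'a. x \<le> y \<longrightarrow> x + z \<le> y + z) \<and>
     (\<forall>(x::'a) y (c::real). x \<le> y \<and> 0 \<le> c \<longrightarrow> c *\<^sub>R x \<le> c *\<^sub>R y) \<and>
     (\<forall>x y::'a. lat_abs x \<le> lat_abs y \<longrightarrow> norm x \<le> norm y)"

definition infinite_dimensional :: "'a::real_vector itself \<Rightarrow> bool" where
  "infinite_dimensional _ \<longleftrightarrow> \<not> (\<exists>B::'a set. finite B \<and> span B = UNIV)"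

definition ldisj :: "'v::{lattice,uminus,zero} \<Rightarrow> 'v \<Rightarrow> bool" where
  "ldisj x y \<longleftrightarrow> inf (lat_abs x) (lat_abs y) = 0"

definition pw_disj :: "nat \<Rightarrow> (nat \<Rightarrow> 'v::{lattice,uminus,zero}) \<Rightarrow> bool" where
  "pw_disj n x \<longleftrightarrow> (\<forall>i<n. \<forall>j<n. i \<noteq> j \<longrightarrow> ldisj (x i) (x j))"

text \<open>A Banach lattice is given by a carrier S (a set of elements of an ambient
  lattice-ordered group) and a norm function N on it.\<close>

definition upper_est :: "'v::{lattice,ab_group_add} set \<Rightarrow> ('v \<Rightarrow> real) \<Rightarrow> real \<Rightarrow> bool" where
  "upper_est S N p \<longleftrightarrow> (\<exists>M. \<forall>n x. (\<forall>i<n. x i \<in> S) \<and> pw_disj n x \<longrightarrow>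
      N (\<Sum>i<n. x i) \<le> M * (\<Sum>i<n. N (x i) powr p) powr (1 / p))"

definition lower_est :: "'v::{lattice,ab_group_add} set \<Rightarrow> ('v \<Rightarrow> real) \<Rightarrow> real \<Rightarrow> bool" where
  "lower_est S N q \<longleftrightarrow> (\<exists>M. \<forall>n x. (\<forall>i<n. x i \<in> S) \<and> pw_disj n x \<longrightarrow>
      (\<Sum>i<n. N (x i) powr q) powr (1 / q) \<le> M * N (\<Sum>i<n. x i))"

definition delta_ind :: "'v::{lattice,ab_group_add} set \<Rightarrow> ('v \<Rightarrow> real) \<Rightarrow> ereal" where
  "delta_ind S N = Sup {ereal p | p. 1 \<le> p \<and> upper_est S N p}"

definition sigma_ind :: "'v::{lattice,ab_group_add} set \<Rightarrow> ('v \<Rightarrow> real) \<Rightarrow> ereal" where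
  "sigma_ind S N = Inf {ereal q | q. 1 \<le> q \<and> lower_est S N q}"

definition Bn :: "'a::{banach,lattice} itself \<Rightarrow> nat \<Rightarrow> (nat \<Rightarrow> 'a) set" where
  "Bn _ n = {x. (\<forall>i<n. norm (x i) = 1) \<and> pw_disj n x}"

definition XU_n :: "'a::{banach,lattice} itself \<Rightarrow> nat \<Rightarrow> (nat \<Rightarrow> real) \<Rightarrow> ereal" where
  "XU_n T n a = (SUP x\<in>Bn T n. ereal (norm (\<Sum>i<n. a i *\<^sub>R x i)))"

definition Phi_n :: "'a::{banach,lattice} itself \<Rightarrow> nat \<Rightarrow> (nat \<Rightarrow> real) \<Rightarrow> real" where
  "Phi_n T n a = (INF x\<in>Bn T n. norm (\<Sum>i<n. a i *\<^sub>R x i))"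

definition XL_n :: "'a::{banach,lattice} itself \<Rightarrow> nat \<Rightarrow> (nat \<Rightarrow> real) \<Rightarrow> real" where
  "XL_n T n a = (INF (m, b)\<in>{(m, b :: nat \<Rightarrow> nat \<Rightarrow> real). \<forall>i<n. a i = (\<Sum>k<m. b k i)}.
                    (\<Sum>k<m. Phi_n T n (b k)))"

definition XU_norm_e :: "'a::{banach,lattice} itself \<Rightarrow> (nat \<Rightarrow> real) \<Rightarrow> ereal" where
  "XU_norm_e T a = (SUP n. XU_n T n a)"

definition XL_norm_e :: "'a::{banach,lattice} itself \<Rightarrow> (nat \<Rightarrow> real) \<Rightarrow> ereal" where
  "XL_norm_e T a = (SUP n. ereal (XL_n T n a))"

definition XU_space :: "'a::{banach,lattice} itself \<Rightarrow> (nat \<Rightarrow> real) set" where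
  "XU_space T = {a. XU_norm_e T a < \<infinity>}"

definition XL_space :: "'a::{banach,lattice} itself \<Rightarrow> (nat \<Rightarrow> real) set" where
  "XL_space T = {a. XL_norm_e T a < \<infinity>}"

definition XU_norm :: "'a::{banach,lattice} itself \<Rightarrow> (nat \<Rightarrow> real) \<Rightarrow> real" where
  "XU_norm T a = real_of_ereal (XU_norm_e T a)"

definition XL_norm :: "'a::{banach,lattice} itself \<Rightarrow> (nat \<Rightarrow> real) \<Rightarrow> real" where
  "XL_norm T a = real_of_ereal (XL_norm_e T a)"

end

theory Submission
  imports Defs "HOL-Library.Lattice_Algebras"
begin

text \<open>
  Sequences and vectors are linked by \<open>a \<mapsto> \<Sum>\<^sub>i a\<^sub>i x\<^sub>i\<close> for \<open>x \<in> \<B>\<^sub>n\<close>: sequences with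
  disjoint supports go to disjoint vectors, and for a disjoint nonzero family \<open>y\<^sub>i\<close> the
  normalised \<open>y\<^sub>i\<close> form an element of \<open>\<B>\<^sub>n\<close> that represents \<open>\<Sum> y\<^sub>i\<close> by the sequence
  \<open>(\<parallel>y\<^sub>i\<parallel>)\<close>. Through these two facts an upper \<open>p\<close>-estimate passes in both directions
  between \<open>X\<close> and \<open>X\<^sub>U\<close>, whose norm is a supremum over \<open>\<B>\<^sub>n\<close>.

  A lower \<open>q\<close>-estimate of \<open>X\<close> passes to \<open>X\<^sub>L\<close> by splitting each decomposition along the
  disjoint supports and applying Minkowski's inequality in \<open>l\<^sub>q\<close>. For the converse one must
  bound \<open>\<Phi>\<^sub>N\<close> of the sequence \<open>(\<parallel>y\<^sub>i\<parallel>)\<close> for every \<open>N\<close>, i.e. complete the \<open>y\<^sub>i\<close> to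
  long disjoint families. This is where infinite dimension enters: a maximal finite disjoint
  family of positive elements consists of atoms and spans \<open>X\<close>, so disjoint families of every
  length exist, and by repeatedly halving such families one finds \<open>0 \<le> x\<^sub>i \<le> \<bar>y\<^sub>i\<bar>\<close> with
  \<open>\<parallel>y\<^sub>i\<parallel> \<le> 2\<parallel>x\<^sub>i\<parallel>\<close> that leave room for a disjoint family of any length. Hence
  \<open>\<Phi>\<^sub>N(\<parallel>y\<^sub>i\<parallel>) \<le> 2\<parallel>\<Sum> y\<^sub>i\<parallel>\<close>.
\<close>

section \<open>Elementary Banach lattice calculus\<close>

locale real_banach_lattice =
  fixes T :: "'a::{banach,lattice} itself"
  assumes banach_lattice: "banach_lattice T"
begin

sublocale L: lattice_ab_group_add_abs lat_abs "(+)" "0::'a" "(-)" uminus "(\<le>)" "(<)" inf sup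
proof unfold_locales
  fix a b c :: 'a
  assume "a \<le> b"
  then have "a + c \<le> b + c" using banach_lattice by (auto simp: banach_lattice_def)
  then show "c + a \<le> c + b" by (simp add: add.commute)
qed (simp add: lat_abs_def)

lemma scaleR_mono_lattice: "(x::'a) \<le> y \<Longrightarrow> 0 \<le> c \<Longrightarrow> c *\<^sub>R x \<le> c *\<^sub>R y"
  using banach_lattice by (auto simp: banach_lattice_def)

lemma norm_mono_lat_abs: "lat_abs (x::'a) \<le> lat_abs y \<Longrightarrow> norm x \<le> norm y"
  using banach_lattice by (auto simp: banach_lattice_def)

lemma lat_abs_nonneg [simp]: "0 \<le> lat_abs (x::'a)"
  by (rule L.abs_ge_zero)

lemma lat_abs_of_nonneg: "0 \<le> (x::'a) \<Longrightarrow> lat_abs x = x"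
  by (rule L.abs_of_nonneg)

lemma norm_lat_abs [simp]: "norm (lat_abs (x::'a)) = norm x"
  by (intro antisym norm_mono_lat_abs) (simp_all add: lat_abs_of_nonneg)

lemma norm_mono_nonneg: "0 \<le> (x::'a) \<Longrightarrow> x \<le> y \<Longrightarrow> norm x \<le> norm y"
  using norm_mono_lat_abs[of x y] lat_abs_of_nonneg[of x] lat_abs_of_nonneg[of y] by auto

lemma scaleR_nonneg_lattice: "0 \<le> (x::'a) \<Longrightarrow> 0 \<le> c \<Longrightarrow> 0 \<le> c *\<^sub>R x"
  using scaleR_mono_lattice[of 0 x c] by simp

lemma scaleR_right_mono_lattice: "0 \<le> (x::'a) \<Longrightarrow> c \<le> d \<Longrightarrow> c *\<^sub>R x \<le> d *\<^sub>R x"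
  using scaleR_nonneg_lattice[of x "d - c"] L.add_right_mono[of 0 "(d - c) *\<^sub>R x" "c *\<^sub>R x"]
  by (simp add: algebra_simps)

lemma scaleR_sup_nonneg: "0 \<le> c \<Longrightarrow> c *\<^sub>R sup x y = sup (c *\<^sub>R x) (c *\<^sub>R (y::'a))"
proof (cases "c = 0")
  case False
  assume c: "0 \<le> c"
  show ?thesis
  proof (rule antisym)
    have "z \<le> inverse c *\<^sub>R sup (c *\<^sub>R x) (c *\<^sub>R y)" if "c *\<^sub>R z \<le> sup (c *\<^sub>R x) (c *\<^sub>R y)" for z
      using scaleR_mono_lattice[OF that, of "inverse c"] c False by simp
    then have "sup x y \<le> inverse c *\<^sub>R sup (c *\<^sub>R x) (c *\<^sub>R y)" by simp
    from scaleR_mono_lattice[OF this c] False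
    show "c *\<^sub>R sup x y \<le> sup (c *\<^sub>R x) (c *\<^sub>R y)" by simp
  qed (use scaleR_mono_lattice[OF _ c] in \<open>simp add: le_supI1 le_supI2\<close>)
qed simp

lemma scaleR_inf_nonneg: "0 \<le> c \<Longrightarrow> c *\<^sub>R inf x y = inf (c *\<^sub>R x) (c *\<^sub>R (y::'a))"
  by (simp only: L.inf_eq_neg_sup scaleR_minus_right scaleR_sup_nonneg)

lemma lat_abs_scaleR: "lat_abs (c *\<^sub>R (x::'a)) = \<bar>c\<bar> *\<^sub>R lat_abs x"
proof -
  have "lat_abs (c *\<^sub>R x) = lat_abs (\<bar>c\<bar> *\<^sub>R x)"
    by (cases "c \<ge> 0") (simp_all only: abs_of_nonneg abs_of_neg not_le scaleR_minus_left L.abs_minus_cancel)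
  also have "\<dots> = \<bar>c\<bar> *\<^sub>R lat_abs x"
    unfolding lat_abs_def by (simp add: scaleR_sup_nonneg)
  finally show ?thesis .
qed

lemma sum_nonneg_lattice: "(\<And>i. i \<in> A \<Longrightarrow> 0 \<le> f i) \<Longrightarrow> 0 \<le> (sum f A :: 'a)"
  by (induction A rule: infinite_finite_induct) (simp_all add: L.add_nonneg_nonneg)

lemma sum_mono_lattice: "(\<And>i. i \<in> A \<Longrightarrow> f i \<le> g i) \<Longrightarrow> (sum f A :: 'a) \<le> sum g A"
  by (induction A rule: infinite_finite_induct) (simp_all add: L.add_mono)

lemma sum_mono2_lattice:
  "finite B \<Longrightarrow> A \<subseteq> B \<Longrightarrow> (\<And>x. x \<in> B - A \<Longrightarrow> 0 \<le> f x) \<Longrightarrow> sum f A \<le> (sum f B :: 'a)"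
  using sum_nonneg_lattice[of "B - A" f] by (simp add: sum.subset_diff L.add_increasing)

lemma inf_eq_zero_antimono:
  assumes "0 \<le> (a'::'a)" "a' \<le> a" "0 \<le> b" "inf a b = 0"
  shows "inf a' b = 0"
proof (rule antisym)
  have "inf a' b \<le> inf a b" using assms(2) by (rule inf_mono) simp
  then show "inf a' b \<le> 0" using assms(4) by simp
qed (use assms in simp)

lemma inf_eq_zero_antimono2:
  assumes "0 \<le> (a'::'a)" "a' \<le> a" "0 \<le> b'" "b' \<le> b" "inf a b = 0"
  shows "inf a' b' = 0"
proof -
  have "inf a b' = 0" using assms inf_eq_zero_antimono[of b' b a] by (simp add: inf_commute)
  then show ?thesis using assms by (intro inf_eq_zero_antimono[of a' a b']) auto
qed

lemma inf_add_eq_zero: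
  assumes "0 \<le> (a::'a)" "0 \<le> b" "0 \<le> c" "inf a c = 0" "inf b c = 0"
  shows "inf (a + b) c = 0"
proof (rule antisym)
  have "inf (a + b) c \<le> inf (inf (a + b) (a + c)) (inf (c + b) (c + c))"
    using assms L.add_increasing[of a c c] L.add_increasing2[of b c c] L.add_increasing[of c c c]
    by (auto intro: le_infI1 le_infI2 order_trans)
  also have "\<dots> = inf a c + inf b c"
    by (simp only: L.add_inf_distrib_right L.add_inf_distrib_left inf_assoc inf_left_commute)
  finally show "inf (a + b) c \<le> 0" using assms by simp
qed (use assms in \<open>simp add: L.add_nonneg_nonneg\<close>)

lemma inf_scaleR_eq_zero:
  assumes "0 \<le> (a::'a)" "0 \<le> b" "inf a b = 0" "0 \<le> c" "0 \<le> d"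
  shows "inf (c *\<^sub>R a) (d *\<^sub>R b) = 0"
proof -
  have left: "inf (c *\<^sub>R a) b = 0" if "0 \<le> a" "0 \<le> b" "inf a b = 0" "0 \<le> c" for a b :: 'a and c
  proof (cases "c \<le> 1")
    case True
    then show ?thesis
      using that inf_eq_zero_antimono[of "c *\<^sub>R a" a b] scaleR_right_mono_lattice[of a c 1]
      by (simp add: scaleR_nonneg_lattice)
  next
    case False
    then have "inf (c *\<^sub>R a) b \<le> inf (c *\<^sub>R a) (c *\<^sub>R b)"
      using that scaleR_right_mono_lattice[of b 1 c] by (intro inf_mono) simp_all
    also have "\<dots> = 0" using that by (simp flip: scaleR_inf_nonneg)
    finally show ?thesis using that by (intro antisym) (simp_all add: scaleR_nonneg_lattice)
  qed
  have "inf (c *\<^sub>R a) b = 0" using assms by (intro left)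
  then have "inf (d *\<^sub>R b) (c *\<^sub>R a) = 0"
    using assms by (intro left) (simp_all add: inf_commute scaleR_nonneg_lattice)
  then show ?thesis by (simp add: inf_commute)
qed

lemma inf_sum_eq_zero:
  assumes "finite A" "\<And>i. i \<in> A \<Longrightarrow> 0 \<le> f i" "\<And>i. i \<in> A \<Longrightarrow> inf (f i) c = 0" "0 \<le> (c::'a)"
  shows "inf (sum f A) c = 0"
  using assms
proof (induction A rule: finite_induct)
  case (insert x F)
  then show ?case by (simp add: inf_add_eq_zero sum_nonneg_lattice)
qed (simp add: inf_absorb1)

lemma inf_sum_eq_zero':
  "finite A \<Longrightarrow> (\<And>i. i \<in> A \<Longrightarrow> 0 \<le> f i) \<Longrightarrow> (\<And>i. i \<in> A \<Longrightarrow> inf c (f i) = 0) \<Longrightarrow> 0 \<le> (c::'a)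
   \<Longrightarrow> inf c (sum f A) = 0"
  using inf_sum_eq_zero[of A f c] by (simp add: inf_commute)

lemma inf_pos_neg_part: "inf (sup x 0) (sup (- x) 0) = (0::'a)"
proof -
  define P where "P = sup x 0"
  have neg: "sup (- x) 0 = P + - x"
    unfolding P_def by (simp only: L.add_sup_distrib_right) (simp add: sup_commute)
  have "inf P (P + - x) = P + inf 0 (- x)" by (simp only: L.add_inf_distrib_left) simp
  also have "inf 0 (- x) = - sup 0 x"
    by (subst L.inf_eq_neg_sup) (simp only: minus_zero minus_minus)
  also have "P + - sup 0 x = 0" unfolding P_def by (simp only: sup_commute[of x 0] right_minus)
  finally show ?thesis using neg P_def by simp
qed

lemma pos_part_minus_neg_part: "sup x 0 - sup (- x) 0 = (x::'a)"
proof -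
  have "L.nprt x = - sup (- x) 0"
    unfolding L.nprt_def by (subst L.inf_eq_neg_sup) (simp only: minus_zero minus_minus)
  then show ?thesis using L.prts[of x] unfolding L.pprt_def by simp
qed

lemma lat_abs_diff_disjoint:
  assumes "0 \<le> (u::'a)" "0 \<le> v" "inf u v = 0"
  shows "lat_abs (u - v) = u + v"
proof -
  have uv: "u + v = sup u v" using L.add_eq_inf_sup[of u v] assms by simp
  have "lat_abs (u - v) = sup ((u + u) + - (u + v)) ((v + v) + - (u + v))"
    unfolding lat_abs_def by (simp add: algebra_simps)
  also have "\<dots> = sup (u + u) (v + v) + - (u + v)"
    by (simp only: L.add_sup_distrib_right)
  also have "sup (u + u) (v + v) = (u + v) + (u + v)"
    using scaleR_sup_nonneg[of 2 u v] by (simp add: scaleR_2 uv)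
  finally show ?thesis by simp
qed

lemma lat_abs_add_ldisj: "ldisj a b \<Longrightarrow> lat_abs (a + b) = lat_abs a + lat_abs (b::'a)"
proof (rule antisym[rotated])
  assume "ldisj a b"
  then have "lat_abs (lat_abs a - lat_abs b) = lat_abs a + lat_abs b"
    by (intro lat_abs_diff_disjoint) (simp_all add: ldisj_def)
  moreover have "lat_abs (lat_abs a - lat_abs b) \<le> lat_abs (a + b)"
  proof (rule L.abs_leI)
    show "lat_abs a - lat_abs b \<le> lat_abs (a + b)"
      using L.abs_triangle_ineq[of "a + b" "- b"] by (simp add: L.diff_le_eq)
    show "- (lat_abs a - lat_abs b) \<le> lat_abs (a + b)"
      using L.abs_triangle_ineq[of "a + b" "- a"] by (simp add: L.diff_le_eq add.commute)
  qed
  ultimately show "lat_abs a + lat_abs b \<le> lat_abs (a + b)" by simp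
qed (rule L.abs_triangle_ineq)

lemma lat_abs_sum_ldisj:
  "finite A \<Longrightarrow> (\<And>i j. i \<in> A \<Longrightarrow> j \<in> A \<Longrightarrow> i \<noteq> j \<Longrightarrow> ldisj (f i) (f j))
   \<Longrightarrow> lat_abs (sum f A :: 'a) = (\<Sum>i\<in>A. lat_abs (f i))"
proof (induction A rule: finite_induct)
  case (insert x F)
  then have IH: "lat_abs (sum f F) = (\<Sum>i\<in>F. lat_abs (f i))" by auto
  have "inf (lat_abs (f x)) (\<Sum>i\<in>F. lat_abs (f i)) = 0"
    using insert by (intro inf_sum_eq_zero') (auto simp: ldisj_def)
  then have "ldisj (f x) (sum f F)" unfolding ldisj_def IH .
  then show ?case using insert IH lat_abs_add_ldisj by simp
qed (simp add: lat_abs_def)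

lemma ldisj_scaleR: "ldisj x y \<Longrightarrow> ldisj (c *\<^sub>R x) (d *\<^sub>R (y::'a))"
  unfolding ldisj_def lat_abs_scaleR by (rule inf_scaleR_eq_zero) auto

lemma lat_abs_sum_scaleR:
  "pw_disj n x \<Longrightarrow> lat_abs (\<Sum>i<n. c i *\<^sub>R (x i::'a)) = (\<Sum>i<n. \<bar>c i\<bar> *\<^sub>R lat_abs (x i))"
  by (subst lat_abs_sum_ldisj) (auto simp: pw_disj_def ldisj_scaleR lat_abs_scaleR)

lemma ldisj_sum_scaleR:
  assumes x: "pw_disj n x" and cd: "\<And>i. i < n \<Longrightarrow> c i = 0 \<or> d i = 0"
  shows "ldisj (\<Sum>i<n. c i *\<^sub>R (x i::'a)) (\<Sum>i<n. d i *\<^sub>R x i)"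
proof -
  have "inf (\<bar>c i\<bar> *\<^sub>R lat_abs (x i)) (\<bar>d j\<bar> *\<^sub>R lat_abs (x j)) = 0" if "i < n" "j < n" for i j
  proof (cases "i = j")
    case True
    then show ?thesis using cd[of i] that by (auto simp: inf_absorb1 inf_absorb2 scaleR_nonneg_lattice)
  next
    case False
    then show ?thesis using x that by (intro inf_scaleR_eq_zero) (auto simp: pw_disj_def ldisj_def)
  qed
  then have "inf (\<Sum>i<n. \<bar>c i\<bar> *\<^sub>R lat_abs (x i)) (\<Sum>j<n. \<bar>d j\<bar> *\<^sub>R lat_abs (x j)) = 0"
    by (intro inf_sum_eq_zero inf_sum_eq_zero') (auto intro!: scaleR_nonneg_lattice sum_nonneg_lattice)
  then show ?thesis unfolding ldisj_def using lat_abs_sum_scaleR[OF x] by simp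
qed

lemma norm_sum_scaleR_mono:
  assumes "pw_disj n x" "\<And>i. i < n \<Longrightarrow> \<bar>c i\<bar> \<le> \<bar>d i\<bar>"
  shows "norm (\<Sum>i<n. c i *\<^sub>R (x i::'a)) \<le> norm (\<Sum>i<n. d i *\<^sub>R x i)"
  using assms
  by (intro norm_mono_lat_abs)
     (auto simp: lat_abs_sum_scaleR intro!: sum_mono_lattice scaleR_right_mono_lattice)

subsection \<open>Disjoint families in infinite dimensions\<close>

lemma lat_abs_sup_diff_le: "lat_abs (sup a c - sup b c) \<le> lat_abs (a - (b::'a))"
proof -
  have le: "sup x c - sup y c \<le> lat_abs (x - y)" for x y :: 'a
  proof -
    have "sup x c \<le> sup (y + lat_abs (x - y)) (c + lat_abs (x - y))"
      using L.abs_ge_self[of "x - y"] L.add_increasing2[of "lat_abs (x - y)" c c]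
      by (auto simp: L.diff_le_eq add.commute intro: le_supI1 le_supI2)
    also have "\<dots> = sup y c + lat_abs (x - y)" by (simp only: L.add_sup_distrib_right)
    finally show ?thesis by (metis L.diff_le_eq add.commute)
  qed
  have "- (sup a c - sup b c) \<le> lat_abs (a - b)"
    using le[of b a] L.abs_minus_commute[of b a] by (metis minus_diff_eq)
  with le[of a b] show ?thesis by (rule L.abs_leI)
qed

lemma closed_nonneg: "closed {x::'a. 0 \<le> x}"
proof -
  have "norm (sup (- x) 0 - sup (- y) 0) \<le> norm (x - y)" for x y :: 'a
    using norm_mono_lat_abs[OF lat_abs_sup_diff_le[of "- x" 0 "- y"]] by (simp add: norm_minus_commute)
  then have "continuous_on UNIV (\<lambda>x::'a. sup (- x) 0)"
    unfolding continuous_on_iff dist_norm by (meson le_less_trans)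
  moreover have "{x::'a. 0 \<le> x} = {x. sup (- x) 0 = 0}"
    by (simp only: sup.absorb_iff2[symmetric] L.neg_le_0_iff_le)
  ultimately show ?thesis by (simp add: closed_Collect_eq)
qed

lemma closed_scaleR_le: "closed {c::real. c *\<^sub>R u \<le> (x::'a)}"
proof -
  have "{c::real. c *\<^sub>R u \<le> x} = (\<lambda>c. x - c *\<^sub>R u) -` {y. 0 \<le> y}"
    by (auto simp: L.diff_ge_0_iff_ge)
  moreover have "closed ((\<lambda>c::real. x - c *\<^sub>R u) -` {y. 0 \<le> y})"
    by (rule continuous_closed_vimage[OF closed_nonneg]) (intro continuous_intros)
  ultimately show ?thesis by simp
qed

lemma closed_le_scaleR: "closed {c::real. (x::'a) \<le> c *\<^sub>R u}"
proof -
  have "{c::real. x \<le> c *\<^sub>R u} = (\<lambda>c. c *\<^sub>R u - x) -` {y. 0 \<le> y}"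
    by (auto simp: L.diff_ge_0_iff_ge)
  moreover have "closed ((\<lambda>c::real. c *\<^sub>R u - x) -` {y. 0 \<le> y})"
    by (rule continuous_closed_vimage[OF closed_nonneg]) (intro continuous_intros)
  ultimately show ?thesis by simp
qed

end

definition pos_disj_family :: "nat \<Rightarrow> (nat \<Rightarrow> 'v::{lattice,zero}) \<Rightarrow> bool" where
  "pos_disj_family n u \<longleftrightarrow>
     (\<forall>i<n. 0 \<le> u i \<and> u i \<noteq> 0) \<and> (\<forall>i<n. \<forall>j<n. i \<noteq> j \<longrightarrow> inf (u i) (u j) = 0)"

lemma pos_disj_family_mono: "pos_disj_family n u \<Longrightarrow> m \<le> n \<Longrightarrow> pos_disj_family m u"
  unfolding pos_disj_family_def by auto

context real_banach_lattice
begin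

lemma pos_disj_family_split:
  assumes u: "pos_disj_family N (u::nat \<Rightarrow> 'a)" and i: "i < N"
    and pq: "0 \<le> p" "p \<noteq> 0" "p \<le> u i" "0 \<le> q" "q \<noteq> 0" "q \<le> u i" "inf p q = 0"
  shows "pos_disj_family (Suc N) (u(i := p, N := q))"
  unfolding pos_disj_family_def
proof (intro conjI allI impI)
  fix j assume "j < Suc N"
  then show "0 \<le> (u(i := p, N := q)) j" "(u(i := p, N := q)) j \<noteq> 0"
    using u pq i by (auto simp: pos_disj_family_def)
next
  have ui: "0 \<le> u i" using u i by (auto simp: pos_disj_family_def)
  have "inf p (u l) = 0" "inf q (u l) = 0" if "l < N" "l \<noteq> i" for l
    using u i that pq ui inf_eq_zero_antimono[of p "u i" "u l"] inf_eq_zero_antimono[of q "u i" "u l"]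
    by (auto simp: pos_disj_family_def)
  then show "inf ((u(i := p, N := q)) j) ((u(i := p, N := q)) k) = 0"
    if "j < Suc N" "k < Suc N" "j \<noteq> k" for j k
    using that u i pq by (auto simp: pos_disj_family_def inf_commute less_Suc_eq)
qed

lemma pos_disj_family_pw_disj:
  "pos_disj_family n (u::nat \<Rightarrow> 'a) \<Longrightarrow> pw_disj n u"
  by (simp add: pos_disj_family_def pw_disj_def ldisj_def lat_abs_of_nonneg)

text \<open>The comparison sets \<open>{t. v \<le> t u}\<close> and \<open>{t. t u \<le> v}\<close> are closed and, by hypothesis,
  cover \<open>[0, 1]\<close>; by connectedness they meet.\<close>

lemma comparable_segment_imp_multiple:
  assumes u: "0 \<le> (u::'a)" and v: "0 \<le> v" "v \<le> u"
    and cover: "\<And>t. 0 \<le> t \<Longrightarrow> t \<le> 1 \<Longrightarrow> v \<le> t *\<^sub>R u \<or> t *\<^sub>R u \<le> v"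
  shows "\<exists>c. v = c *\<^sub>R u"
proof -
  define T1 where "T1 = {0..1} \<inter> {t. v \<le> t *\<^sub>R u}"
  define T2 where "T2 = {0..1} \<inter> {t. t *\<^sub>R u \<le> v}"
  have cl: "closed T1" "closed T2" unfolding T1_def T2_def
    by (intro closed_Int closed_real_atLeastAtMost closed_scaleR_le closed_le_scaleR)+
  have ne: "1 \<in> T1" "0 \<in> T2" using v by (auto simp: T1_def T2_def)
  have bd: "bdd_below T1" "bdd_above T2" unfolding T1_def T2_def bdd_below_def bdd_above_def by auto
  define r where "r = Inf T1"
  define s where "s = Sup T2"
  have r: "r \<in> T1" unfolding r_def using closed_contains_Inf[of T1] cl bd ne by auto
  have s: "s \<in> T2" unfolding s_def using closed_contains_Sup[of T2] cl bd ne by auto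
  have "r \<le> s"
  proof (rule ccontr)
    assume "\<not> r \<le> s"
    then have "s < (s + r) / 2" "(s + r) / 2 < r" by auto
    moreover have "(s + r) / 2 \<in> T1 \<or> (s + r) / 2 \<in> T2"
      using cover[of "(s + r) / 2"] r s by (auto simp: T1_def T2_def)
    ultimately show False
      using cInf_lower[OF _ bd(1)] cSup_upper[OF _ bd(2)] unfolding r_def s_def by force
  qed
  then have "v \<le> s *\<^sub>R u"
    using r scaleR_right_mono_lattice[OF u, of r s] by (auto simp: T1_def)
  then have "v = s *\<^sub>R u" using s by (auto simp: T2_def)
  then show ?thesis ..
qed

text \<open>In a family of maximal length every member is an atom: otherwise some \<open>v \<le> u i\<close> is
  incomparable with some \<open>t u i\<close>, and the positive and negative parts of \<open>v - t u i\<close> split \<open>u i\<close>.\<close>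

lemma maximal_pos_disj_family_atom:
  assumes u: "pos_disj_family N (u::nat \<Rightarrow> 'a)" and maximal: "\<not> (\<exists>w::nat \<Rightarrow> 'a. pos_disj_family (Suc N) w)"
    and i: "i < N" and v: "0 \<le> v" "v \<le> u i"
  shows "\<exists>c. v = c *\<^sub>R u i"
proof (rule comparable_segment_imp_multiple[OF _ v])
  show ui: "0 \<le> u i" using u i by (auto simp: pos_disj_family_def)
  fix t :: real assume t: "0 \<le> t" "t \<le> 1"
  define p where "p = sup (v - t *\<^sub>R u i) 0"
  define q where "q = sup (t *\<^sub>R u i - v) 0"
  have tu: "0 \<le> t *\<^sub>R u i" "t *\<^sub>R u i \<le> u i"
    using ui t scaleR_nonneg_lattice scaleR_right_mono_lattice[OF ui, of t 1] by auto
  have pq: "0 \<le> p" "p \<le> u i" "0 \<le> q" "q \<le> u i" "inf p q = 0"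
    using v tu ui inf_pos_neg_part[of "v - t *\<^sub>R u i"]
    by (auto simp: p_def q_def L.diff_le_eq L.add_increasing2 intro: order_trans)
  have "p = 0 \<or> q = 0"
    using pos_disj_family_split[OF u i pq(1) _ pq(2,3) _ pq(4,5)] maximal by metis
  moreover have "p = 0 \<longleftrightarrow> v \<le> t *\<^sub>R u i" "q = 0 \<longleftrightarrow> t *\<^sub>R u i \<le> v"
    by (simp_all add: p_def q_def sup.absorb_iff2[symmetric] L.diff_le_0_iff_le)
  ultimately show "v \<le> t *\<^sub>R u i \<or> t *\<^sub>R u i \<le> v" by blast
qed

text \<open>Take the largest \<open>c\<close> with \<open>c u \<le> z\<close> (it exists since the positive cone is closed); the
  part of \<open>z - c u\<close> below \<open>u\<close> is again a multiple of \<open>u\<close>, which maximality of \<open>c\<close> forces to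
  vanish.\<close>

lemma subtract_atom_multiple:
  assumes u: "0 \<le> (u::'a)" "u \<noteq> 0" and atom: "\<And>w. 0 \<le> w \<Longrightarrow> w \<le> u \<Longrightarrow> \<exists>c. w = c *\<^sub>R u"
    and z: "0 \<le> z"
  shows "\<exists>c\<ge>0. c *\<^sub>R u \<le> z \<and> inf (z - c *\<^sub>R u) u = 0"
proof -
  define S where "S = {0..} \<inter> {c::real. c *\<^sub>R u \<le> z}"
  have S0: "0 \<in> S" using z by (auto simp: S_def)
  have "bdd_above S"
  proof (rule bdd_aboveI)
    fix c assume "c \<in> S"
    then have "c * norm u \<le> norm z"
      using norm_mono_nonneg[of "c *\<^sub>R u" z] u by (auto simp: S_def scaleR_nonneg_lattice)
    then show "c \<le> norm z / norm u" using u by (simp add: field_simps)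
  qed
  moreover have "closed S" unfolding S_def by (intro closed_Int closed_atLeast closed_scaleR_le)
  ultimately have c0: "Sup S \<in> S" and max: "\<And>c. c \<in> S \<Longrightarrow> c \<le> Sup S"
    using closed_contains_Sup[of S] S0 cSup_upper by auto
  define c0 where "c0 = Sup S"
  have c0S: "0 \<le> c0" "c0 *\<^sub>R u \<le> z" using c0 by (auto simp: S_def c0_def)
  define w where "w = inf (z - c0 *\<^sub>R u) u"
  have w: "0 \<le> w" "w \<le> u" "w \<le> z - c0 *\<^sub>R u" using c0S u by (auto simp: w_def L.diff_ge_0_iff_ge)
  obtain d where d: "w = d *\<^sub>R u" using atom[OF w(1,2)] by blast
  have "d \<le> 0"
  proof (rule ccontr)
    assume "\<not> d \<le> 0"
    moreover have "(c0 + d) *\<^sub>R u \<le> z"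
      using L.add_left_mono[OF w(3), of "c0 *\<^sub>R u"] by (simp add: d scaleR_add_left)
    ultimately have "c0 + d \<in> S" using c0S by (auto simp: S_def)
    then show False using max \<open>\<not> d \<le> 0\<close> by (fastforce simp: c0_def)
  qed
  then have "w \<le> 0" using scaleR_right_mono_lattice[OF u(1), of d 0] d by simp
  then have "w = 0" using w(1) by (rule antisym)
  then show ?thesis using c0S by (auto simp: w_def)
qed

lemma maximal_pos_disj_family_decomp:
  assumes u: "pos_disj_family N (u::nat \<Rightarrow> 'a)" and maximal: "\<not> (\<exists>w::nat \<Rightarrow> 'a. pos_disj_family (Suc N) w)"
    and x: "0 \<le> x" and m: "m \<le> N"
  shows "\<exists>z. 0 \<le> z \<and> z \<le> x \<and> x - z \<in> span (u ` {..<m}) \<and> (\<forall>i<m. inf z (u i) = 0)"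
  using m
proof (induction m)
  case 0
  then show ?case using x by (intro exI[of _ x]) auto
next
  case (Suc m)
  then obtain z where z: "0 \<le> z" "z \<le> x" "x - z \<in> span (u ` {..<m})" "\<forall>i<m. inf z (u i) = 0"
    by auto
  have m: "m < N" using Suc by simp
  have um: "0 \<le> u m" "u m \<noteq> 0" using u m by (auto simp: pos_disj_family_def)
  obtain c where c: "0 \<le> c" "c *\<^sub>R u m \<le> z" "inf (z - c *\<^sub>R u m) (u m) = 0"
    using subtract_atom_multiple[OF um maximal_pos_disj_family_atom[OF u maximal m] z(1)] by blast
  define z' where "z' = z - c *\<^sub>R u m"
  have z': "0 \<le> z'" "z' \<le> z"
    using c um scaleR_nonneg_lattice[of "u m" c] by (auto simp: z'_def L.diff_ge_0_iff_ge L.diff_le_eq L.add_increasing2)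
  have "x - z' = (x - z) + c *\<^sub>R u m" by (simp add: z'_def)
  moreover have "x - z \<in> span (u ` {..<Suc m})"
    using z(3) span_mono[of "u ` {..<m}" "u ` {..<Suc m}"] image_mono[of "{..<m}" "{..<Suc m}" u]
    by auto
  moreover have "c *\<^sub>R u m \<in> span (u ` {..<Suc m})" by (intro span_mul span_base) auto
  ultimately have "x - z' \<in> span (u ` {..<Suc m})" by (metis span_add)
  moreover have "inf z' (u i) = 0" if "i < Suc m" for i
    using that z z' c um u m inf_eq_zero_antimono[of z' z "u i"]
    by (auto simp: z'_def less_Suc_eq pos_disj_family_def)
  ultimately show ?case using z z' by (intro exI[of _ z']) auto
qed

lemma pos_disj_family_exists:
  assumes "infinite_dimensional T"
  shows "\<exists>u::nat \<Rightarrow> 'a. pos_disj_family n u"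
proof (rule ccontr)
  assume no: "\<not> (\<exists>u::nat \<Rightarrow> 'a. pos_disj_family n u)"
  have bound: "m < n" if "pos_disj_family m (u::nat \<Rightarrow> 'a)" for m u
    using that no pos_disj_family_mono[of m u n] by (meson not_less)
  define P where "P m \<longleftrightarrow> (\<exists>u::nat \<Rightarrow> 'a. pos_disj_family m u)" for m
  have P0: "P 0" by (simp add: P_def pos_disj_family_def)
  have P_le: "P m \<Longrightarrow> m \<le> n" for m using bound by (auto simp: P_def less_imp_le)
  define N where "N = (GREATEST m. P m)"
  obtain u :: "nat \<Rightarrow> 'a" where u: "pos_disj_family N u"
    using GreatestI_nat[of P 0 n, OF P0 P_le] unfolding N_def P_def by blast
  have maximal: "\<not> (\<exists>w::nat \<Rightarrow> 'a. pos_disj_family (Suc N) w)"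
    using Greatest_le_nat[of P "Suc N" n, OF _ P_le] unfolding N_def P_def by auto
  have pos: "x \<in> span (u ` {..<N})" if x: "0 \<le> x" for x
  proof -
    obtain z where z: "0 \<le> z" "z \<le> x" "x - z \<in> span (u ` {..<N})" "\<forall>i<N. inf z (u i) = 0"
      using maximal_pos_disj_family_decomp[OF u maximal x order_refl] by blast
    have "z = 0"
    proof (rule ccontr)
      assume "z \<noteq> 0"
      then have "pos_disj_family (Suc N) (u(N := z))"
        using u z by (auto simp: pos_disj_family_def less_Suc_eq inf_commute)
      then show False using maximal by blast
    qed
    then show ?thesis using z by simp
  qed
  have "x \<in> span (u ` {..<N})" for x
    using span_diff[OF pos pos, of "sup x 0" "sup (- x) 0"] pos_part_minus_neg_part[of x] by simp
  then show False using assms unfolding infinite_dimensional_def by blast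
qed

subsection \<open>Room for a disjoint family\<close>

lemma exists_scale_not_le:
  assumes "0 \<le> (w::'a)" "w \<noteq> 0"
  shows "\<exists>d>0. \<not> w \<le> d *\<^sub>R y"
proof (rule ccontr)
  assume "\<not> (\<exists>d>0. \<not> w \<le> d *\<^sub>R y)"
  then have "closure {0<..} \<subseteq> {d::real. w \<le> d *\<^sub>R y}"
    by (intro closure_minimal closed_le_scaleR) auto
  then have "w \<le> 0" by auto
  then show False using assms by (auto intro: antisym)
qed

lemma exists_uniform_scale_not_le:
  assumes w: "pos_disj_family K (w::nat \<Rightarrow> 'a)" and y: "0 \<le> y"
  shows "\<exists>\<delta>>0. \<forall>l<K. \<not> w l \<le> \<delta> *\<^sub>R y"
proof -
  have "\<forall>l. \<exists>d. l < K \<longrightarrow> d > 0 \<and> \<not> w l \<le> d *\<^sub>R y"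
    using exists_scale_not_le w by (auto simp: pos_disj_family_def)
  then obtain d where d: "\<And>l. l < K \<Longrightarrow> d l > 0 \<and> \<not> w l \<le> d l *\<^sub>R y" by metis
  define \<delta> where "\<delta> = Min (insert 1 (d ` {..<K}))"
  have "\<not> w l \<le> \<delta> *\<^sub>R y" if l: "l < K" for l
  proof
    assume "w l \<le> \<delta> *\<^sub>R y"
    also have "\<dots> \<le> d l *\<^sub>R y" using l by (intro scaleR_right_mono_lattice[OF y]) (simp add: \<delta>_def)
    finally show False using d[OF l] by simp
  qed
  moreover have "\<delta> > 0" unfolding \<delta>_def using d by (auto simp: Min_gr_iff)
  ultimately show ?thesis by blast
qed

lemma le_add_pos_parts:
  assumes "0 \<le> s1" "0 \<le> s2" "inf s1 s2 = 0" "0 \<le> C"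
  shows "(y::'a) \<le> sup (y - C *\<^sub>R s1) 0 + sup (y - C *\<^sub>R s2) 0"
proof -
  have "sup (y - C *\<^sub>R s1) (y - C *\<^sub>R s2) = y + - inf (C *\<^sub>R s1) (C *\<^sub>R s2)"
    by (simp only: diff_conv_add_uminus L.add_sup_distrib_left L.neg_inf_eq_sup)
  also have "inf (C *\<^sub>R s1) (C *\<^sub>R s2) = 0" using assms by (simp flip: scaleR_inf_nonneg)
  finally have "y = sup (y - C *\<^sub>R s1) (y - C *\<^sub>R s2)" by simp
  also have "\<dots> \<le> sup (y - C *\<^sub>R s1) 0 + sup (y - C *\<^sub>R s2) 0"
    by (intro sup_least) (simp_all add: L.add_increasing L.add_increasing2)
  finally show ?thesis .
qed

lemma inf_pos_parts_cut:
  assumes "0 < \<delta>" "0 \<le> w" "w \<le> s"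
  shows "inf (sup (y - (1 / \<delta>) *\<^sub>R s) 0) (sup (w - \<delta> *\<^sub>R y) 0) = (0::'a)"
proof -
  define f where "f = y - (1 / \<delta>) *\<^sub>R s"
  have "\<delta> *\<^sub>R f + (w - \<delta> *\<^sub>R y) = w - s" using assms(1) by (simp add: f_def algebra_simps)
  also have "\<dots> \<le> 0" using assms by (simp add: L.diff_le_0_iff_le)
  finally have "(\<delta> *\<^sub>R f + (w - \<delta> *\<^sub>R y)) + - (\<delta> *\<^sub>R f) \<le> 0 + - (\<delta> *\<^sub>R f)"
    by (rule L.add_right_mono)
  then have "w - \<delta> *\<^sub>R y \<le> \<delta> *\<^sub>R (- f)" by simp
  then have "sup (w - \<delta> *\<^sub>R y) 0 \<le> \<delta> *\<^sub>R sup (- f) 0"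
    using scaleR_sup_nonneg[of \<delta> "- f" 0] assms by (auto intro: le_supI1)
  moreover have "inf (sup f 0) (\<delta> *\<^sub>R sup (- f) 0) = 0"
    using inf_scaleR_eq_zero[of "sup f 0" "sup (- f) 0" 1 \<delta>] inf_pos_neg_part[of f] assms by simp
  ultimately have "inf (sup f 0) (sup (w - \<delta> *\<^sub>R y) 0) \<le> 0"
    by (metis inf_mono order_refl)
  then show ?thesis unfolding f_def by (intro antisym) auto
qed

lemma pos_disj_family_cut:
  assumes y: "0 \<le> y" and d: "0 < \<delta>"
    and v: "\<And>j. j < M \<Longrightarrow> 0 \<le> v j \<and> v j \<le> s \<and> \<not> v j \<le> \<delta> *\<^sub>R y"
    and vd: "\<And>i j. i < M \<Longrightarrow> j < M \<Longrightarrow> i \<noteq> j \<Longrightarrow> inf (v i) (v j) = 0"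
  shows "pos_disj_family M (\<lambda>j. sup (v j - \<delta> *\<^sub>R y) (0::'a))"
    and "\<And>j. j < M \<Longrightarrow> sup (v j - \<delta> *\<^sub>R y) 0 \<le> v j"
    and "\<And>j. j < M \<Longrightarrow> inf (sup (y - (1 / \<delta>) *\<^sub>R s) 0) (sup (v j - \<delta> *\<^sub>R y) 0) = 0"
proof -
  have dy: "0 \<le> \<delta> *\<^sub>R y" using scaleR_nonneg_lattice[OF y] d by simp
  show le: "sup (v j - \<delta> *\<^sub>R y) 0 \<le> v j" if "j < M" for j
    using v[OF that] dy by (auto simp: L.diff_le_eq L.add_increasing2)
  show "inf (sup (y - (1 / \<delta>) *\<^sub>R s) 0) (sup (v j - \<delta> *\<^sub>R y) 0) = 0" if "j < M" for j
    using inf_pos_parts_cut[OF d] v[OF that] by blast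
  show "pos_disj_family M (\<lambda>j. sup (v j - \<delta> *\<^sub>R y) (0::'a))"
    unfolding pos_disj_family_def
  proof (intro conjI allI impI)
    fix j assume "j < M"
    then show "0 \<le> sup (v j - \<delta> *\<^sub>R y) 0" "sup (v j - \<delta> *\<^sub>R y) 0 \<noteq> 0"
      using v by (auto simp: sup.absorb_iff2[symmetric] L.diff_le_0_iff_le)
  next
    fix i j assume ij: "i < M" "j < M" "i \<noteq> j"
    have "inf (sup (v i - \<delta> *\<^sub>R y) 0) (v j) = 0"
      by (rule inf_eq_zero_antimono[OF _ le[OF ij(1)]]) (use v ij vd in auto)
    then have "inf (sup (v j - \<delta> *\<^sub>R y) 0) (sup (v i - \<delta> *\<^sub>R y) 0) = 0"
      using inf_eq_zero_antimono[OF _ le[OF ij(2)]] by (simp add: inf_commute)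
    then show "inf (sup (v i - \<delta> *\<^sub>R y) 0) (sup (v j - \<delta> *\<^sub>R y) 0) = 0"
      by (simp add: inf_commute)
  qed
qed

text \<open>Split a disjoint family of length \<open>2 M\<close> into two halves with sums \<open>s\<^sub>0, s\<^sub>M\<close>. By
  \<open>le_add_pos_parts\<close> one of the two cuts of \<open>y\<close> carries half of its norm, and it is disjoint from
  the corresponding cut-down half of the family.\<close>

lemma room_step:
  assumes y: "0 \<le> (y::'a)" and w: "pos_disj_family (2 * M) w"
  shows "\<exists>x z. 0 \<le> x \<and> x \<le> y \<and> norm y \<le> 2 * norm x \<and> pos_disj_family M z
     \<and> (\<forall>j<M. inf x (z j) = 0) \<and> (\<forall>j<M. \<exists>l<2 * M. z j \<le> w l)"
proof -
  obtain \<delta> where d: "\<delta> > 0" and nle: "\<And>l. l < 2 * M \<Longrightarrow> \<not> w l \<le> \<delta> *\<^sub>R y"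
    using exists_uniform_scale_not_le[OF w y] by blast
  have wp: "\<And>l. l < 2 * M \<Longrightarrow> 0 \<le> w l"
    and wd: "\<And>l l'. l < 2 * M \<Longrightarrow> l' < 2 * M \<Longrightarrow> l \<noteq> l' \<Longrightarrow> inf (w l) (w l') = 0"
    using w by (auto simp: pos_disj_family_def)
  define half where "half k = (\<Sum>l<M. w (k + l))" for k
  define x where "x k = sup (y - (1 / \<delta>) *\<^sub>R half k) 0" for k
  have half: "0 \<le> half k" if "k \<in> {0, M}" for k
    using that wp unfolding half_def by (intro sum_nonneg_lattice) auto
  have "inf (half 0) (half M) = 0" unfolding half_def
    using wp wd half[of M] by (intro inf_sum_eq_zero inf_sum_eq_zero') (auto simp: half_def)
  then have "y \<le> x 0 + x M"
    unfolding x_def using half d by (intro le_add_pos_parts) auto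
  then have "norm y \<le> norm (x 0) + norm (x M)"
    using norm_mono_nonneg[OF y] norm_triangle_ineq order_trans by blast
  then have "norm y \<le> 2 * norm (x 0) \<or> norm y \<le> 2 * norm (x M)" by linarith
  then obtain k where k: "k \<in> {0, M}" and nk: "norm y \<le> 2 * norm (x k)" by blast
  define z where "z = (\<lambda>j. sup (w (k + j) - \<delta> *\<^sub>R y) 0)"
  have kj: "k + j < 2 * M" if "j < M" for j using k that by auto
  have v: "0 \<le> w (k + j) \<and> w (k + j) \<le> half k \<and> \<not> w (k + j) \<le> \<delta> *\<^sub>R y" if j: "j < M" for j
  proof (intro conjI)
    show "w (k + j) \<le> half k"
      using sum_mono2_lattice[of "{..<M}" "{j}" "\<lambda>l. w (k + l)"] j wp kj by (simp add: half_def)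
  qed (use wp nle kj[OF j] in auto)
  have vd: "inf (w (k + i)) (w (k + j)) = 0" if "i < M" "j < M" "i \<noteq> j" for i j
    using that by (intro wd kj) auto
  note cut = pos_disj_family_cut[of y \<delta> M "\<lambda>j. w (k + j)" "half k", OF y d v vd]
  have "0 \<le> x k" "x k \<le> y"
    using y scaleR_nonneg_lattice[OF half[OF k], of "1 / \<delta>"] d
    by (auto simp: x_def L.diff_le_eq L.add_increasing2)
  moreover have "\<forall>j<M. \<exists>l<2 * M. z j \<le> w l" using cut(2) kj unfolding z_def by blast
  moreover have "pos_disj_family M z" "\<forall>j<M. inf (x k) (z j) = 0"
    using cut(1,3) by (simp_all add: x_def z_def)
  ultimately show ?thesis using nk by blast
qed

lemma room_for_disjoint_family:
  fixes r M :: nat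
  assumes inf_dim: "infinite_dimensional T" and y: "\<And>i. 0 \<le> (y i::'a)"
  shows "\<exists>x z. (\<forall>i<r. 0 \<le> x i \<and> x i \<le> y i \<and> norm (y i) \<le> 2 * norm (x i)) \<and> pos_disj_family M z
      \<and> (\<forall>i<r. \<forall>j<M. inf (x i) (z j) = 0)"
proof (induction r arbitrary: M)
  case 0
  then show ?case using pos_disj_family_exists[OF inf_dim] by auto
next
  case (Suc r)
  obtain x w where x: "\<forall>i<r. 0 \<le> x i \<and> x i \<le> y i \<and> norm (y i) \<le> 2 * norm (x i)"
    and w: "pos_disj_family (2 * M) w" and xw: "\<forall>i<r. \<forall>j<2 * M. inf (x i) (w j) = 0"
    using Suc.IH[of "2 * M"] by (elim exE conjE)
  obtain x' z where x': "0 \<le> x'" "x' \<le> y r" "norm (y r) \<le> 2 * norm x'"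
    and z: "pos_disj_family M z" "\<forall>j<M. inf x' (z j) = 0" "\<forall>j<M. \<exists>l<2 * M. z j \<le> w l"
    using room_step[OF y[of r] w] by blast
  have "inf (x i) (z j) = 0" if ij: "i < r" "j < M" for i j
  proof -
    obtain l where l: "l < 2 * M" "z j \<le> w l" using z(3) ij by blast
    have "inf (w l) (x i) = 0" using xw ij l by (simp add: inf_commute)
    then have "inf (z j) (x i) = 0"
      using inf_eq_zero_antimono[of "z j" "w l" "x i"] z(1) l x ij by (auto simp: pos_disj_family_def)
    then show ?thesis by (simp add: inf_commute)
  qed
  then have "\<forall>i<Suc r. \<forall>j<M. inf ((x(r := x')) i) (z j) = 0"
    using z(2) by (simp add: less_Suc_eq)
  moreover have "\<forall>i<Suc r. 0 \<le> (x(r := x')) i \<and> (x(r := x')) i \<le> y i \<and> norm (y i) \<le> 2 * norm ((x(r := x')) i)"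
    using x x' by (simp add: less_Suc_eq)
  ultimately show ?case using z(1) by blast
qed

end

lemma convex_powr_nonneg:
  fixes q s s' l :: real
  assumes q: "1 \<le> q" and s: "0 \<le> s" "0 \<le> s'" and l: "0 \<le> l" "l \<le> 1"
  shows "((1 - l) * s + l * s') powr q \<le> (1 - l) * s powr q + l * s' powr q"
proof -
  have le_self: "c powr q \<le> c" if "0 \<le> c" "c \<le> 1" for c :: real
    using powr_le_one_le[of c q] that q by (cases "c = 0") auto
  consider "s = 0" | "s' = 0" | "s > 0" "s' > 0" using s by fastforce
  then show ?thesis
  proof cases
    case 1
    have "(l * s') powr q \<le> l * s' powr q"
      using le_self[OF l] l s by (simp add: powr_mult mult_right_mono)
    then show ?thesis using 1 q by simp
  next
    case 2
    have "((1 - l) * s) powr q \<le> (1 - l) * s powr q"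
      using le_self[of "1 - l"] l s by (simp add: powr_mult mult_right_mono)
    then show ?thesis using 2 q by simp
  next
    case 3
    from convex_onD[OF powr_convex[OF q], of l s s'] show ?thesis using 3 l by (simp add: algebra_simps)
  qed
qed

lemma sum_powr_convex_comb_le_one:
  fixes u v :: "'b \<Rightarrow> real"
  assumes q: "1 \<le> q" and u: "\<And>j. j \<in> A \<Longrightarrow> 0 \<le> u j" and v: "\<And>j. j \<in> A \<Longrightarrow> 0 \<le> v j"
    and su: "(\<Sum>j\<in>A. u j powr q) = 1" and sv: "(\<Sum>j\<in>A. v j powr q) = 1" and l: "0 \<le> l" "l \<le> 1"
  shows "(\<Sum>j\<in>A. ((1 - l) * u j + l * v j) powr q) \<le> 1"
proof -
  have "(\<Sum>j\<in>A. ((1 - l) * u j + l * v j) powr q) \<le> (\<Sum>j\<in>A. (1 - l) * u j powr q + l * v j powr q)"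
    using convex_powr_nonneg[OF q _ _ l] u v by (intro sum_mono) auto
  also have "\<dots> = 1" using su sv by (simp add: sum.distrib flip: sum_distrib_left)
  finally show ?thesis .
qed

text \<open>Minkowski's inequality for the \<open>l\<^sub>q\<close> norm of nonnegative finite families, by convexity
  of \<open>t \<mapsto> t\<^sup>q\<close> after normalising both summands to norm one.\<close>

lemma minkowski_powr:
  fixes u v :: "'b \<Rightarrow> real"
  assumes q: "1 \<le> q" and A: "finite A" and u: "\<And>j. j \<in> A \<Longrightarrow> 0 \<le> u j" and v: "\<And>j. j \<in> A \<Longrightarrow> 0 \<le> v j"
  shows "(\<Sum>j\<in>A. (u j + v j) powr q) powr (1/q)
     \<le> (\<Sum>j\<in>A. u j powr q) powr (1/q) + (\<Sum>j\<in>A. v j powr q) powr (1/q)"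
proof -
  define a where "a = (\<Sum>j\<in>A. u j powr q) powr (1/q)"
  define b where "b = (\<Sum>j\<in>A. v j powr q) powr (1/q)"
  have qp: "0 < q" using q by simp
  have a_pow: "a powr q = (\<Sum>j\<in>A. u j powr q)" and b_pow: "b powr q = (\<Sum>j\<in>A. v j powr q)"
    using qp u v by (simp_all add: a_def b_def powr_powr sum_nonneg)
  consider "a = 0" | "b = 0" | "a > 0" "b > 0" by (fastforce simp: a_def b_def)
  then show ?thesis
  proof cases
    case 1
    then have "\<And>j. j \<in> A \<Longrightarrow> u j = 0"
      using a_pow u A qp by (simp add: sum_nonneg_eq_0_iff)
    then show ?thesis by (simp add: a_def b_def)
  next
    case 2
    then have "\<And>j. j \<in> A \<Longrightarrow> v j = 0"
      using b_pow v A qp by (simp add: sum_nonneg_eq_0_iff)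
    then show ?thesis by (simp add: a_def b_def)
  next
    case 3
    define l where "l = b / (a + b)"
    have l: "0 \<le> l" "l \<le> 1" "1 - l = a / (a + b)" using 3 by (auto simp: l_def field_simps)
    have "(\<Sum>j\<in>A. u j powr q) \<noteq> 0" "(\<Sum>j\<in>A. v j powr q) \<noteq> 0"
      using 3 by (auto simp: a_def b_def)
    then have sums: "(\<Sum>j\<in>A. (u j / a) powr q) = 1" "(\<Sum>j\<in>A. (v j / b) powr q) = 1"
      using u v 3 a_pow b_pow by (simp_all add: powr_divide flip: sum_divide_distrib)
    have "(u j + v j) / (a + b) = (1 - l) * (u j / a) + l * (v j / b)" for j
      using l(3) 3 by (simp add: l_def add_divide_distrib)
    then have "(\<Sum>j\<in>A. ((u j + v j) / (a + b)) powr q) \<le> 1"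
      using sum_powr_convex_comb_le_one[where u = "\<lambda>j. u j / a" and v = "\<lambda>j. v j / b", OF q _ _ sums l(1,2)]
        u v 3 by simp
    then have "(\<Sum>j\<in>A. (u j + v j) powr q) \<le> (a + b) powr q"
      using u v 3 by (simp add: powr_divide divide_le_eq flip: sum_divide_distrib)
    then have "(\<Sum>j\<in>A. (u j + v j) powr q) powr (1/q) \<le> ((a + b) powr q) powr (1/q)"
      using qp u v by (intro powr_mono2) (auto intro: sum_nonneg)
    also have "\<dots> = a + b" using 3 qp by (simp add: powr_powr)
    finally show ?thesis unfolding a_def b_def .
  qed
qed

lemma minkowski_powr_sum:
  fixes c :: "nat \<Rightarrow> 'b \<Rightarrow> real"
  assumes q: "1 \<le> q" and A: "finite A" and c: "\<And>k j. 0 \<le> c k j"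
  shows "(\<Sum>j\<in>A. (\<Sum>k<m. c k j) powr q) powr (1/q) \<le> (\<Sum>k<m. (\<Sum>j\<in>A. c k j powr q) powr (1/q))"
proof (induction m)
  case (Suc m)
  have "(\<Sum>j\<in>A. (\<Sum>k<Suc m. c k j) powr q) powr (1/q)
      \<le> (\<Sum>j\<in>A. (\<Sum>k<m. c k j) powr q) powr (1/q) + (\<Sum>j\<in>A. c m j powr q) powr (1/q)"
    using minkowski_powr[OF q A, of "\<lambda>j. \<Sum>k<m. c k j" "c m"] c by (simp add: sum_nonneg)
  then show ?case using Suc.IH by simp
qed simp

lemma sum_powr_root_mono:
  assumes "\<And>j. j \<in> A \<Longrightarrow> 0 \<le> u j \<and> u j \<le> v j" "0 < (p::real)"
  shows "(\<Sum>j\<in>A. u j powr p) powr (1/p) \<le> (\<Sum>j\<in>A. v j powr p) powr (1/p)"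
  using assms by (intro powr_mono2 sum_mono sum_nonneg) auto

lemma sum_single_support:
  fixes c :: real and r :: nat
  assumes "\<And>j j'. j < r \<Longrightarrow> j' < r \<Longrightarrow> j \<noteq> j' \<Longrightarrow> \<not> (P j \<and> P j')"
  shows "\<bar>\<Sum>j<r. if P j then c else 0\<bar> \<le> \<bar>c\<bar>"
proof -
  have "card {j. j < r \<and> P j} \<le> Suc 0"
    using assms by (subst card_le_Suc0_iff_eq) auto
  moreover have "(\<Sum>j<r. if P j then c else 0) = of_nat (card {j. j < r \<and> P j}) * c"
    by (simp add: sum.If_cases Int_def conj_commute)
  ultimately show ?thesis by (simp add: abs_mult mult_left_le_one_le)
qed

lemma sum_apply_fun: "(sum f A) (l::'b) = (\<Sum>j\<in>A. f j l)" for f :: "'c \<Rightarrow> 'b \<Rightarrow> real"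
  by (induction A rule: infinite_finite_induct) auto

lemma ldisj_real_fun: "ldisj (a::'b \<Rightarrow> real) b \<longleftrightarrow> (\<forall>i. a i = 0 \<or> b i = 0)"
proof -
  have "min (max x (- x)) (max y (- y)) = 0 \<longleftrightarrow> x = 0 \<or> y = 0" for x y :: real
    by linarith
  then show ?thesis unfolding ldisj_def lat_abs_def by (simp add: fun_eq_iff sup_max inf_min)
qed

lemma sum_unit_seqs:
  fixes n :: nat
  shows "(\<Sum>i<n. (\<lambda>l. if l = i then t i else (0::real))) = (\<lambda>l. if l < n then t l else 0)"
  by (induction n) (auto simp: fun_eq_iff sum_apply_fun)

lemma sum_scaleR_unit_seq:
  fixes m :: nat
  shows "(\<Sum>l<m. (if l = i then c else 0) *\<^sub>R (x l::'a::real_vector)) = (if i < m then c *\<^sub>R x i else 0)"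
  by (induction m) (auto simp: less_Suc_eq)

lemma pw_disj_nonzero_reindex:
  fixes y :: "nat \<Rightarrow> 'a::{lattice,uminus,zero}"
  assumes y: "pw_disj n y"
  obtains m f where "bij_betw f {..<m} {i. i < n \<and> y i \<noteq> 0}"
    "pw_disj m (\<lambda>l. y (f l))" "\<forall>l<m. y (f l) \<noteq> 0"
proof -
  obtain f where f: "bij_betw f {0..<card {i. i < n \<and> y i \<noteq> 0}} {i. i < n \<and> y i \<noteq> 0}"
    using ex_bij_betw_nat_finite[of "{i. i < n \<and> y i \<noteq> 0}"] by auto
  have "pw_disj (card {i. i < n \<and> y i \<noteq> 0}) (\<lambda>l. y (f l))"
    unfolding pw_disj_def
  proof (intro allI impI)
    fix i j assume "i < card {i. i < n \<and> y i \<noteq> 0}" "j < card {i. i < n \<and> y i \<noteq> 0}" "i \<noteq> j"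
    then have "f i < n" "f j < n" "f i \<noteq> f j"
      using bij_betw_apply[OF f] bij_betw_imp_inj_on[OF f] by (auto simp: inj_on_def)
    then show "ldisj (y (f i)) (y (f j))" using y by (simp add: pw_disj_def)
  qed
  with f show ?thesis using that bij_betw_apply[OF f] by (auto simp: atLeast0LessThan)
qed

lemma sum_reindex_nonzero:
  fixes g :: "nat \<Rightarrow> 'c::comm_monoid_add"
  assumes f: "bij_betw f {..<m} {i. i < n \<and> y i \<noteq> (0::'b::zero)}" and g: "\<And>i. y i = 0 \<Longrightarrow> g i = 0"
  shows "(\<Sum>i<n. g i) = (\<Sum>l<m. g (f l))"
proof -
  have "(\<Sum>i<n. g i) = (\<Sum>i\<in>{i. i < n \<and> y i \<noteq> 0}. g i)"
    using g by (intro sum.mono_neutral_right) auto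
  also have "\<dots> = (\<Sum>l<m. g (f l))" using sum.reindex_bij_betw[OF f, of g] by simp
  finally show ?thesis .
qed

lemma upper_est_nonzero:
  assumes "\<And>n y. pw_disj n (y::nat \<Rightarrow> 'a::{real_normed_vector,lattice}) \<Longrightarrow> \<forall>i<n. y i \<noteq> 0
     \<Longrightarrow> norm (\<Sum>i<n. y i) \<le> M * (\<Sum>i<n. norm (y i) powr p) powr (1 / p)"
  shows "upper_est (UNIV::'a set) norm p"
  unfolding upper_est_def
proof (intro exI[of _ M] allI impI, elim conjE)
  fix n and y :: "nat \<Rightarrow> 'a" assume "pw_disj n y"
  then obtain m f where f: "bij_betw f {..<m} {i. i < n \<and> y i \<noteq> 0}"
    and y': "pw_disj m (\<lambda>l. y (f l))" "\<forall>l<m. y (f l) \<noteq> 0"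
    by (rule pw_disj_nonzero_reindex)
  from assms[OF y'] show "norm (\<Sum>i<n. y i) \<le> M * (\<Sum>i<n. norm (y i) powr p) powr (1 / p)"
    by (simp add: sum_reindex_nonzero[OF f, of y] sum_reindex_nonzero[OF f, of "\<lambda>i. norm (y i) powr p"])
qed

lemma lower_est_nonzero:
  assumes "\<And>n y. pw_disj n (y::nat \<Rightarrow> 'a::{real_normed_vector,lattice}) \<Longrightarrow> \<forall>i<n. y i \<noteq> 0
     \<Longrightarrow> (\<Sum>i<n. norm (y i) powr q) powr (1 / q) \<le> M * norm (\<Sum>i<n. y i)"
  shows "lower_est (UNIV::'a set) norm q"
  unfolding lower_est_def
proof (intro exI[of _ M] allI impI, elim conjE)
  fix n and y :: "nat \<Rightarrow> 'a" assume "pw_disj n y"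
  then obtain m f where f: "bij_betw f {..<m} {i. i < n \<and> y i \<noteq> 0}"
    and y': "pw_disj m (\<lambda>l. y (f l))" "\<forall>l<m. y (f l) \<noteq> 0"
    by (rule pw_disj_nonzero_reindex)
  from assms[OF y'] show "(\<Sum>i<n. norm (y i) powr q) powr (1 / q) \<le> M * norm (\<Sum>i<n. y i)"
    by (simp add: sum_reindex_nonzero[OF f, of y] sum_reindex_nonzero[OF f, of "\<lambda>i. norm (y i) powr q"])
qed

section \<open>The space \<open>X\<^sub>U\<close>\<close>

context real_banach_lattice
begin

lemma Bn_normalize:
  assumes "pw_disj n (y::nat \<Rightarrow> 'a)" "\<forall>i<n. y i \<noteq> 0"
  shows "(\<lambda>i. (1 / norm (y i)) *\<^sub>R y i) \<in> Bn T n"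
  using assms unfolding Bn_def pw_disj_def by (auto intro: ldisj_scaleR)

lemma norm_le_XU_norm_e: "x \<in> Bn T n \<Longrightarrow> ereal (norm (\<Sum>i<n. a i *\<^sub>R x i)) \<le> XU_norm_e T a"
  unfolding XU_norm_e_def XU_n_def by (rule SUP_upper2[of n]) (auto intro: SUP_upper)

lemma XU_norm_e_nonneg: "0 \<le> XU_norm_e T a"
  using norm_le_XU_norm_e[of "\<lambda>_. 0" 0 a] by (simp add: Bn_def pw_disj_def zero_ereal_def)

lemma XU_norm_e_eq: "a \<in> XU_space T \<Longrightarrow> XU_norm_e T a = ereal (XU_norm T a)"
  unfolding XU_space_def XU_norm_def using XU_norm_e_nonneg[of a] by (cases "XU_norm_e T a") auto

lemma XU_norm_nonneg: "0 \<le> XU_norm T a"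
  unfolding XU_norm_def using XU_norm_e_nonneg[of a] by (cases "XU_norm_e T a") auto

lemma norm_le_XU_norm: "a \<in> XU_space T \<Longrightarrow> x \<in> Bn T n \<Longrightarrow> norm (\<Sum>i<n. a i *\<^sub>R x i) \<le> XU_norm T a"
  using norm_le_XU_norm_e[of x n a] XU_norm_e_eq[of a] by simp

lemma XU_norm_le:
  assumes "\<And>m x. x \<in> Bn T m \<Longrightarrow> norm (\<Sum>i<m. a i *\<^sub>R x i) \<le> R"
  shows "XU_norm T a \<le> R" and "a \<in> XU_space T"
proof -
  have "XU_norm_e T a \<le> ereal R"
    unfolding XU_norm_e_def XU_n_def using assms by (intro SUP_least) auto
  then show a: "a \<in> XU_space T" by (auto simp: XU_space_def)
  show "XU_norm T a \<le> R" using XU_norm_e_eq[OF a] \<open>XU_norm_e T a \<le> ereal R\<close> by simp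
qed

lemma XU_norm_unit_seq_le:
  "XU_norm T (\<lambda>l. if l = i then c else 0) \<le> \<bar>c\<bar>" "(\<lambda>l. if l = i then c else 0) \<in> XU_space T"
  by (rule XU_norm_le; auto simp: sum_scaleR_unit_seq Bn_def)+

lemma finite_seq_in_XU_space: "(\<lambda>l. if l < n then t l else 0) \<in> XU_space T"
proof (rule XU_norm_le(2))
  fix m x assume x: "x \<in> Bn T m"
  have "norm (\<Sum>l<m. (if l < n then t l else 0) *\<^sub>R x l) \<le> (\<Sum>l<m. norm ((if l < n then t l else 0) *\<^sub>R x l))"
    by (rule norm_sum)
  also have "\<dots> = (\<Sum>l<m. if l \<in> {..<n} then \<bar>t l\<bar> else 0)"
    using x by (intro sum.cong) (auto simp: Bn_def)
  also have "\<dots> = (\<Sum>l\<in>{..<m} \<inter> {..<n}. \<bar>t l\<bar>)"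
    by (simp add: sum.inter_restrict)
  also have "\<dots> \<le> (\<Sum>l<n. \<bar>t l\<bar>)" by (intro sum_mono2) auto
  finally show "norm (\<Sum>l<m. (if l < n then t l else 0) *\<^sub>R x l) \<le> (\<Sum>l<n. \<bar>t l\<bar>)" .
qed

text \<open>An upper estimate passes from \<open>X\<close> to \<open>X\<^sub>U\<close>: testing disjoint sequences \<open>a\<^sub>j\<close> against one
  \<open>x \<in> \<B>\<^sub>m\<close> yields disjoint vectors \<open>\<Sum>\<^sub>l a\<^sub>j\<^sub>l x\<^sub>l\<close> of norm at most \<open>\<parallel>a\<^sub>j\<parallel>\<^sub>U\<close>.\<close>

lemma upper_est_XU:
  assumes est: "upper_est (UNIV::'a set) norm p" and p: "1 \<le> p"
  shows "upper_est (XU_space T) (XU_norm T) p"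
proof -
  obtain M where M: "\<And>n y. pw_disj n (y::nat \<Rightarrow> 'a) \<Longrightarrow>
      norm (\<Sum>i<n. y i) \<le> M * (\<Sum>i<n. norm (y i) powr p) powr (1 / p)"
    using est unfolding upper_est_def by auto
  define M' where "M' = max M 0"
  show ?thesis unfolding upper_est_def
  proof (intro exI[of _ M'] allI impI, elim conjE)
    fix n and a :: "nat \<Rightarrow> nat \<Rightarrow> real"
    assume aS: "\<forall>i<n. a i \<in> XU_space T" and ad: "pw_disj n a"
    show "XU_norm T (\<Sum>i<n. a i) \<le> M' * (\<Sum>i<n. XU_norm T (a i) powr p) powr (1 / p)"
    proof (rule XU_norm_le(1))
      fix m x assume x: "x \<in> Bn T m"
      define w where "w j = (\<Sum>l<m. a j l *\<^sub>R x l)" for j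
      have xd: "pw_disj m x" using x by (simp add: Bn_def)
      have "pw_disj n w"
        using ad unfolding pw_disj_def w_def ldisj_real_fun by (auto intro!: ldisj_sum_scaleR[OF xd])
      then have "norm (\<Sum>j<n. w j) \<le> M * (\<Sum>j<n. norm (w j) powr p) powr (1 / p)" by (rule M)
      also have "\<dots> \<le> M' * (\<Sum>j<n. norm (w j) powr p) powr (1 / p)"
        by (simp add: M'_def mult_right_mono)
      also have "\<dots> \<le> M' * (\<Sum>j<n. XU_norm T (a j) powr p) powr (1 / p)"
        using aS x p by (intro mult_left_mono sum_powr_root_mono) (auto simp: w_def M'_def norm_le_XU_norm)
      finally show "norm (\<Sum>l<m. (\<Sum>j<n. a j) l *\<^sub>R x l) \<le> \<dots>"
        by (simp add: w_def sum_apply_fun scaleR_sum_left sum.swap[of _ "{..<m}"])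
    qed
  qed
qed

text \<open>Conversely, disjoint \<open>y\<^sub>i \<in> X\<close> are tested by the unit sequences \<open>\<parallel>y\<^sub>i\<parallel> e\<^sub>i\<close>: their
  \<open>X\<^sub>U\<close>-norms are at most \<open>\<parallel>y\<^sub>i\<parallel>\<close>, while the \<open>X\<^sub>U\<close>-norm of their sum dominates \<open>\<parallel>\<Sum> y\<^sub>i\<parallel>\<close>
  because the normalised \<open>y\<^sub>i\<close> lie in \<open>\<B>\<^sub>n\<close>.\<close>

lemma upper_est_of_XU:
  assumes est: "upper_est (XU_space T) (XU_norm T) p" and p: "1 \<le> p"
  shows "upper_est (UNIV::'a set) norm p"
proof -
  obtain M where M: "\<And>n a. \<forall>i<n. a i \<in> XU_space T \<Longrightarrow> pw_disj n a \<Longrightarrow>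
      XU_norm T (\<Sum>i<n. a i) \<le> M * (\<Sum>i<n. XU_norm T (a i) powr p) powr (1 / p)"
    using est unfolding upper_est_def by blast
  define M' where "M' = max M 0"
  show ?thesis
  proof (rule upper_est_nonzero[of M'])
    fix n and y :: "nat \<Rightarrow> 'a" assume yd: "pw_disj n y" and nz: "\<forall>i<n. y i \<noteq> 0"
    define e where "e i = (\<lambda>l. if l = i then norm (y i) else 0)" for i
    have e_sum: "(\<Sum>i<n. e i) = (\<lambda>l. if l < n then norm (y l) else 0)"
      unfolding e_def by (rule sum_unit_seqs)
    have "norm (\<Sum>i<n. y i) = norm (\<Sum>l<n. (\<Sum>i<n. e i) l *\<^sub>R ((1 / norm (y l)) *\<^sub>R y l))"
      using nz by (simp add: e_sum)
    also have "\<dots> \<le> XU_norm T (\<Sum>i<n. e i)"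
      unfolding e_sum by (intro norm_le_XU_norm finite_seq_in_XU_space Bn_normalize yd nz)
    also have "\<dots> \<le> M' * (\<Sum>i<n. XU_norm T (e i) powr p) powr (1 / p)"
      using XU_norm_unit_seq_le(2) XU_norm_nonneg
      by (intro order_trans[OF M[of n e]] mult_right_mono)
         (auto simp: e_def M'_def pw_disj_def ldisj_real_fun)
    also have "\<dots> \<le> M' * (\<Sum>i<n. norm (y i) powr p) powr (1 / p)"
      using XU_norm_unit_seq_le(1)[of _ "norm (y _)"] XU_norm_nonneg p
      by (intro mult_left_mono sum_powr_root_mono) (auto simp: e_def M'_def)
    finally show "norm (\<Sum>i<n. y i) \<le> M' * (\<Sum>i<n. norm (y i) powr p) powr (1 / p)" .
  qed
qed

end

section \<open>The space \<open>X\<^sub>L\<close>\<close>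

locale inf_dim_banach_lattice = real_banach_lattice +
  assumes infinite_dimensional: "infinite_dimensional T"
begin

lemma Bn_nonempty: "Bn T n \<noteq> {}"
proof -
  obtain u :: "nat \<Rightarrow> 'a" where u: "pos_disj_family n u"
    using pos_disj_family_exists[OF infinite_dimensional] by blast
  then show ?thesis
    using Bn_normalize[OF pos_disj_family_pw_disj[OF u]] by (auto simp: pos_disj_family_def)
qed

lemma Phi_n_le: "x \<in> Bn T n \<Longrightarrow> Phi_n T n a \<le> norm (\<Sum>i<n. a i *\<^sub>R (x i::'a))"
  unfolding Phi_n_def by (rule cINF_lower) (auto intro: bdd_belowI[of _ 0])

lemma Phi_n_greatest:
  "(\<And>x. x \<in> Bn T n \<Longrightarrow> c \<le> norm (\<Sum>i<n. a i *\<^sub>R (x i::'a))) \<Longrightarrow> c \<le> Phi_n T n a"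
  unfolding Phi_n_def by (rule cINF_greatest[OF Bn_nonempty])

lemma Phi_n_nonneg: "0 \<le> Phi_n T n a"
  by (rule Phi_n_greatest) simp

lemma abs_le_Phi_n: "i < n \<Longrightarrow> \<bar>a i\<bar> \<le> Phi_n T n a"
proof (rule Phi_n_greatest)
  fix x assume i: "i < n" and x: "x \<in> Bn T n"
  then have "\<bar>a i\<bar> = norm (\<Sum>l<n. (if l = i then a i else 0) *\<^sub>R x l)"
    by (simp add: sum_scaleR_unit_seq Bn_def)
  also have "\<dots> \<le> norm (\<Sum>l<n. a l *\<^sub>R x l)"
    using x by (intro norm_sum_scaleR_mono) (auto simp: Bn_def)
  finally show "\<bar>a i\<bar> \<le> norm (\<Sum>i<n. a i *\<^sub>R x i)" .
qed

lemma Phi_n_mono: "n \<le> n' \<Longrightarrow> Phi_n T n a \<le> Phi_n T n' a"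
proof (rule Phi_n_greatest)
  fix x assume n: "n \<le> n'" and x: "x \<in> Bn T n'"
  then have "x \<in> Bn T n" by (auto simp: Bn_def pw_disj_def)
  then have "Phi_n T n a \<le> norm (\<Sum>i<n. a i *\<^sub>R x i)" by (rule Phi_n_le)
  also have "(\<Sum>i<n. a i *\<^sub>R x i) = (\<Sum>i<n'. (if i < n then a i else 0) *\<^sub>R x i)"
    using n by (simp add: if_distrib[of "\<lambda>c. c *\<^sub>R _"] sum.inter_restrict[symmetric] Int_absorb1
        flip: lessThan_iff cong: if_cong)
  also have "norm \<dots> \<le> norm (\<Sum>i<n'. a i *\<^sub>R x i)"
    using x by (intro norm_sum_scaleR_mono) (auto simp: Bn_def)
  finally show "Phi_n T n a \<le> norm (\<Sum>i<n'. a i *\<^sub>R x i)" .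
qed

definition sum_decomps :: "nat \<Rightarrow> (nat \<Rightarrow> real) \<Rightarrow> (nat \<times> (nat \<Rightarrow> nat \<Rightarrow> real)) set" where
  "sum_decomps n a = {(m, b). \<forall>i<n. a i = (\<Sum>k<m. b k i)}"

lemma XL_n_eq: "XL_n T n a = (INF p\<in>sum_decomps n a. (\<Sum>k<fst p. Phi_n T n (snd p k)))"
  unfolding XL_n_def sum_decomps_def by (simp add: case_prod_beta')

lemma XL_n_le: "(m, b) \<in> sum_decomps n a \<Longrightarrow> XL_n T n a \<le> (\<Sum>k<m. Phi_n T n (b k))"
  unfolding XL_n_eq
  using cINF_lower[of "\<lambda>p. \<Sum>k<fst p. Phi_n T n (snd p k)" "sum_decomps n a" "(m, b)"]
  by (force intro: bdd_belowI[of _ 0] sum_nonneg Phi_n_nonneg)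

lemma XL_n_greatest:
  "(\<And>m b. (m, b) \<in> sum_decomps n a \<Longrightarrow> c \<le> (\<Sum>k<m. Phi_n T n (b k))) \<Longrightarrow> c \<le> XL_n T n a"
  unfolding XL_n_eq
proof (rule cINF_greatest)
  have "(1, \<lambda>_. a) \<in> sum_decomps n a" by (simp add: sum_decomps_def)
  then show "sum_decomps n a \<noteq> {}" by blast
qed auto

lemma XL_n_nonneg: "0 \<le> XL_n T n a"
  by (rule XL_n_greatest) (auto intro: sum_nonneg Phi_n_nonneg)

lemma XL_n_le_Phi_n: "XL_n T n a \<le> Phi_n T n a"
  using XL_n_le[of 1 "\<lambda>_. a"] by (simp add: sum_decomps_def)

lemma abs_le_XL_n: "i < n \<Longrightarrow> \<bar>a i\<bar> \<le> XL_n T n a"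
proof (rule XL_n_greatest)
  fix m b assume i: "i < n" and d: "(m, b) \<in> sum_decomps n a"
  have "\<bar>a i\<bar> = \<bar>\<Sum>k<m. b k i\<bar>" using d i by (simp add: sum_decomps_def)
  also have "\<dots> \<le> (\<Sum>k<m. \<bar>b k i\<bar>)" by (rule sum_abs)
  also have "\<dots> \<le> (\<Sum>k<m. Phi_n T n (b k))" by (intro sum_mono abs_le_Phi_n i)
  finally show "\<bar>a i\<bar> \<le> (\<Sum>k<m. Phi_n T n (b k))" .
qed

lemma XL_n_mono: "n \<le> n' \<Longrightarrow> XL_n T n a \<le> XL_n T n' a"
proof (rule XL_n_greatest)
  fix m b assume n: "n \<le> n'" and d: "(m, b) \<in> sum_decomps n' a"
  then have "XL_n T n a \<le> (\<Sum>k<m. Phi_n T n (b k))" by (intro XL_n_le) (auto simp: sum_decomps_def)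
  also have "\<dots> \<le> (\<Sum>k<m. Phi_n T n' (b k))" by (intro sum_mono Phi_n_mono n)
  finally show "XL_n T n a \<le> (\<Sum>k<m. Phi_n T n' (b k))" .
qed

lemma XL_n_add: "XL_n T n (a + a') \<le> XL_n T n a + XL_n T n a'"
proof -
  have concat: "(\<Sum>k<m1 + m2. f k) = (\<Sum>k<m1. f k) + (\<Sum>k<m2. f (m1 + k))" for f :: "nat \<Rightarrow> real" and m1 m2
    by (induction m2) auto
  have key: "XL_n T n (a + a') \<le> (\<Sum>k<m1. Phi_n T n (b1 k)) + (\<Sum>k<m2. Phi_n T n (b2 k))"
    if d1: "(m1, b1) \<in> sum_decomps n a" and d2: "(m2, b2) \<in> sum_decomps n a'" for m1 b1 m2 b2
  proof -
    define b where "b k = (if k < m1 then b1 k else b2 (k - m1))" for k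
    have "(m1 + m2, b) \<in> sum_decomps n (a + a')"
      using d1 d2 by (auto simp: sum_decomps_def concat b_def)
    then have "XL_n T n (a + a') \<le> (\<Sum>k<m1 + m2. Phi_n T n (b k))" by (rule XL_n_le)
    then show ?thesis by (simp add: concat b_def)
  qed
  have "XL_n T n (a + a') - (\<Sum>k<m2. Phi_n T n (b2 k)) \<le> XL_n T n a"
    if "(m2, b2) \<in> sum_decomps n a'" for m2 b2
    by (rule XL_n_greatest) (use key that in force)
  then have "XL_n T n (a + a') - XL_n T n a \<le> XL_n T n a'"
    by (intro XL_n_greatest) force
  then show ?thesis by simp
qed

lemma XL_n_sum:
  fixes r :: nat
  shows "XL_n T n (\<Sum>j<r. a j) \<le> (\<Sum>j<r. XL_n T n (a j))"
proof (induction r)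
  case 0
  have "XL_n T n 0 \<le> 0"
    using XL_n_le[of 0 _ n 0] by (simp add: sum_decomps_def)
  then show ?case by (simp add: zero_fun_def)
next
  case (Suc r)
  then show ?case using XL_n_add[of n "\<Sum>j<r. a j" "a r"] by (simp only: sum.lessThan_Suc)
qed

lemma XL_n_le_XL_norm_e: "ereal (XL_n T n a) \<le> XL_norm_e T a"
  unfolding XL_norm_e_def by (rule SUP_upper) simp

lemma XL_norm_e_eq: "a \<in> XL_space T \<Longrightarrow> XL_norm_e T a = ereal (XL_norm T a)"
  unfolding XL_space_def XL_norm_def using XL_n_le_XL_norm_e[of 0 a] XL_n_nonneg[of 0 a]
  by (cases "XL_norm_e T a") auto

lemma XL_norm_nonneg: "0 \<le> XL_norm T a"
  unfolding XL_norm_def using XL_n_le_XL_norm_e[of 0 a] XL_n_nonneg[of 0 a]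
  by (cases "XL_norm_e T a") auto

lemma XL_n_le_XL_norm: "a \<in> XL_space T \<Longrightarrow> XL_n T n a \<le> XL_norm T a"
  using XL_n_le_XL_norm_e[of n a] XL_norm_e_eq[of a] by simp

lemma XL_norm_le:
  assumes "\<And>n. XL_n T n a \<le> R"
  shows "XL_norm T a \<le> R" and "a \<in> XL_space T"
proof -
  have le: "XL_norm_e T a \<le> ereal R" unfolding XL_norm_e_def using assms by (intro SUP_least) auto
  then show a: "a \<in> XL_space T" by (auto simp: XL_space_def)
  show "XL_norm T a \<le> R" using XL_norm_e_eq[OF a] le by simp
qed

lemma XL_n_tendsto: "a \<in> XL_space T \<Longrightarrow> (\<lambda>n. XL_n T n a) \<longlonglongrightarrow> XL_norm T a"
proof -
  assume a: "a \<in> XL_space T"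
  have bdd: "bdd_above (range (\<lambda>n. XL_n T n a))"
    using XL_n_le_XL_norm[OF a] by (intro bdd_aboveI[of _ "XL_norm T a"]) auto
  have inc: "incseq (\<lambda>n. XL_n T n a)" by (rule incseq_SucI) (rule XL_n_mono, simp)
  have "\<bar>SUP n. ereal (XL_n T n a)\<bar> \<noteq> \<infinity>"
    using XL_norm_e_eq[OF a] unfolding XL_norm_e_def by simp
  then have "ereal (SUP n. XL_n T n a) = (SUP n. ereal (XL_n T n a))" by (rule ereal_SUP)
  then have "XL_norm T a = (SUP n. XL_n T n a)"
    unfolding XL_norm_def XL_norm_e_def by (metis real_of_ereal.simps(1))
  then show ?thesis using LIMSEQ_incseq_SUP[OF bdd inc] by simp
qed

lemma XL_norm_unit_seq:
  "XL_norm T (\<lambda>l. if l = i then c else 0) = \<bar>c\<bar>" "(\<lambda>l. if l = i then c else 0) \<in> XL_space T"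
proof -
  have "XL_n T m (\<lambda>l. if l = i then c else 0) \<le> \<bar>c\<bar>" for m
  proof -
    obtain x where x: "x \<in> Bn T m" using Bn_nonempty by blast
    have "XL_n T m (\<lambda>l. if l = i then c else 0) \<le> Phi_n T m (\<lambda>l. if l = i then c else 0)"
      by (rule XL_n_le_Phi_n)
    also have "\<dots> \<le> norm (\<Sum>l<m. (if l = i then c else 0) *\<^sub>R x l)" by (rule Phi_n_le[OF x])
    also have "\<dots> \<le> \<bar>c\<bar>" using x by (simp add: sum_scaleR_unit_seq Bn_def)
    finally show ?thesis .
  qed
  then have le: "XL_norm T (\<lambda>l. if l = i then c else 0) \<le> \<bar>c\<bar>"
    and a: "(\<lambda>l. if l = i then c else 0) \<in> XL_space T"
    by (rule XL_norm_le)+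
  show "(\<lambda>l. if l = i then c else 0) \<in> XL_space T" by (rule a)
  have "\<bar>c\<bar> \<le> XL_norm T (\<lambda>l. if l = i then c else 0)"
    using abs_le_XL_n[of i "Suc i" "\<lambda>l. if l = i then c else 0"] XL_n_le_XL_norm[OF a, of "Suc i"] by simp
  with le show "XL_norm T (\<lambda>l. if l = i then c else 0) = \<bar>c\<bar>" by simp
qed

text \<open>Splitting a test sequence \<open>b\<close> along disjoint supports \<open>P j\<close> and applying the lower
  estimate of \<open>X\<close> to the disjoint vectors \<open>\<Sum>\<^bsub>i \<in> P j\<^esub> b\<^sub>i x\<^sub>i\<close>.\<close>

lemma Phi_n_restrict_lower_est:
  fixes r :: nat
  assumes M: "\<And>n y. pw_disj n (y::nat \<Rightarrow> 'a) \<Longrightarrow>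
      (\<Sum>i<n. norm (y i) powr q) powr (1 / q) \<le> M * norm (\<Sum>i<n. y i)"
    and M0: "0 < M" and q: "0 < q"
    and P: "\<And>j j' i. j < r \<Longrightarrow> j' < r \<Longrightarrow> j \<noteq> j' \<Longrightarrow> \<not> (P j i \<and> P j' i)"
  shows "(\<Sum>j<r. Phi_n T n (\<lambda>i. if P j i then b i else 0) powr q) powr (1 / q) \<le> M * Phi_n T n b"
proof -
  have "(\<Sum>j<r. Phi_n T n (\<lambda>i. if P j i then b i else 0) powr q) powr (1 / q) / M \<le> Phi_n T n b"
  proof (rule Phi_n_greatest)
    fix x assume x: "x \<in> Bn T n"
    then have xd: "pw_disj n x" by (simp add: Bn_def)
    define w where "w j = (\<Sum>i<n. (if P j i then b i else 0) *\<^sub>R x i)" for j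
    have wd: "pw_disj r w"
      unfolding pw_disj_def w_def
    proof (intro allI impI)
      fix j j' assume "j < r" "j' < r" "j \<noteq> j'"
      then show "ldisj (\<Sum>i<n. (if P j i then b i else 0) *\<^sub>R x i) (\<Sum>i<n. (if P j' i then b i else 0) *\<^sub>R x i)"
        using P by (intro ldisj_sum_scaleR[OF xd]) auto
    qed
    have "(\<Sum>j<r. Phi_n T n (\<lambda>i. if P j i then b i else 0) powr q) powr (1 / q)
        \<le> (\<Sum>j<r. norm (w j) powr q) powr (1 / q)"
      using q by (intro sum_powr_root_mono) (auto simp: w_def intro: Phi_n_nonneg Phi_n_le[OF x])
    also have "\<dots> \<le> M * norm (\<Sum>j<r. w j)" by (rule M[OF wd])
    also have "norm (\<Sum>j<r. w j) = norm (\<Sum>i<n. (\<Sum>j<r. if P j i then b i else 0) *\<^sub>R x i)"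
      unfolding w_def scaleR_sum_left by (subst sum.swap) (rule refl)
    also have "\<dots> \<le> norm (\<Sum>i<n. b i *\<^sub>R x i)"
      using P by (intro norm_sum_scaleR_mono[OF xd] sum_single_support) blast
    finally show "(\<Sum>j<r. Phi_n T n (\<lambda>i. if P j i then b i else 0) powr q) powr (1 / q) / M
        \<le> norm (\<Sum>i<n. b i *\<^sub>R x i)"
      using M0 by (simp add: divide_le_eq mult.commute mult_left_mono)
  qed
  then show ?thesis using M0 by (simp add: divide_le_eq mult.commute)
qed

lemma sum_decomps_restrict:
  fixes r :: nat
  assumes d: "(m, b) \<in> sum_decomps n (\<Sum>j<r. a j)" and j: "j < r"
    and a: "\<And>j j' i. j < r \<Longrightarrow> j' < r \<Longrightarrow> j \<noteq> j' \<Longrightarrow> a j i = 0 \<or> a j' i = 0"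
  shows "(m, \<lambda>k i. if a j i \<noteq> 0 then b k i else 0) \<in> sum_decomps n (a j)"
  unfolding sum_decomps_def
proof (clarify)
  fix i assume i: "i < n"
  show "a j i = (\<Sum>k<m. if a j i \<noteq> 0 then b k i else 0)"
  proof (cases "a j i = 0")
    case False
    have "(\<Sum>j'<r. a j' i) = a j i + (\<Sum>j'\<in>{..<r} - {j}. a j' i)"
      using j by (simp add: sum.remove)
    also have "(\<Sum>j'\<in>{..<r} - {j}. a j' i) = 0"
      using j a False by (intro sum.neutral) blast
    finally have "(\<Sum>j'<r. a j' i) = a j i" by simp
    then show ?thesis using d i False by (simp add: sum_decomps_def sum_apply_fun)
  qed simp
qed

text \<open>For disjoint \<open>a\<^sub>j\<close>, every decomposition \<open>\<Sum>\<^sub>k b\<^sub>k\<close> of \<open>\<Sum>\<^sub>j a\<^sub>j\<close> restricts to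
  decompositions of the \<open>a\<^sub>j\<close>; Minkowski's inequality then reduces the claim to
  \<open>Phi_n_restrict_lower_est\<close>.\<close>

lemma XL_n_lower_est:
  fixes r :: nat
  assumes M: "\<And>n y. pw_disj n (y::nat \<Rightarrow> 'a) \<Longrightarrow>
      (\<Sum>i<n. norm (y i) powr q) powr (1 / q) \<le> M * norm (\<Sum>i<n. y i)"
    and M0: "0 < M" and q: "1 \<le> q"
    and a: "\<And>j j' i. j < r \<Longrightarrow> j' < r \<Longrightarrow> j \<noteq> j' \<Longrightarrow> a j i = 0 \<or> a j' i = 0"
  shows "(\<Sum>j<r. XL_n T n (a j) powr q) powr (1 / q) \<le> M * XL_n T n (\<Sum>j<r. a j)"
proof -
  have "(\<Sum>j<r. XL_n T n (a j) powr q) powr (1 / q) / M \<le> XL_n T n (\<Sum>j<r. a j)"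
  proof (rule XL_n_greatest)
    fix m b assume d: "(m, b) \<in> sum_decomps n (\<Sum>j<r. a j)"
    define bj where "bj k j = (\<lambda>i. if a j i \<noteq> 0 then b k i else 0)" for k j
    have "(m, \<lambda>k. bj k j) \<in> sum_decomps n (a j)" if "j < r" for j
      using sum_decomps_restrict[OF d that a] by (simp add: bj_def)
    then have "(\<Sum>j<r. XL_n T n (a j) powr q) powr (1 / q)
        \<le> (\<Sum>j<r. (\<Sum>k<m. Phi_n T n (bj k j)) powr q) powr (1 / q)"
      using q by (intro sum_powr_root_mono) (auto intro: XL_n_nonneg XL_n_le)
    also have "\<dots> \<le> (\<Sum>k<m. (\<Sum>j<r. Phi_n T n (bj k j) powr q) powr (1 / q))"
      by (rule minkowski_powr_sum[OF q]) (auto intro: Phi_n_nonneg)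
    also have "\<dots> \<le> (\<Sum>k<m. M * Phi_n T n (b k))"
      unfolding bj_def using M0 q a
      by (intro sum_mono Phi_n_restrict_lower_est[OF M]) auto
    finally show "(\<Sum>j<r. XL_n T n (a j) powr q) powr (1 / q) / M \<le> (\<Sum>k<m. Phi_n T n (b k))"
      using M0 by (simp add: divide_le_eq mult.commute sum_distrib_left)
  qed
  then show ?thesis using M0 by (simp add: divide_le_eq mult.commute)
qed

lemma lower_est_XL:
  assumes est: "lower_est (UNIV::'a set) norm q" and q: "1 \<le> q"
  shows "lower_est (XL_space T) (XL_norm T) q"
proof -
  obtain M where M: "\<And>n y. pw_disj n (y::nat \<Rightarrow> 'a) \<Longrightarrow>
      (\<Sum>i<n. norm (y i) powr q) powr (1 / q) \<le> M * norm (\<Sum>i<n. y i)"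
    using est unfolding lower_est_def by auto
  define M' where "M' = max M 1"
  have M'_est: "(\<Sum>i<n. norm (y i) powr q) powr (1 / q) \<le> M' * norm (\<Sum>i<n. y i)"
    if "pw_disj n (y::nat \<Rightarrow> 'a)" for n y
    using M[OF that] by (rule order_trans) (auto simp: M'_def intro: mult_right_mono)
  have M'0: "0 < M'" by (simp add: M'_def)
  show ?thesis unfolding lower_est_def
  proof (intro exI[of _ M'] allI impI, elim conjE)
    fix r and a :: "nat \<Rightarrow> nat \<Rightarrow> real"
    assume aS: "\<forall>i<r. a i \<in> XL_space T" and "pw_disj r a"
    then have ad: "\<And>j j' i. j < r \<Longrightarrow> j' < r \<Longrightarrow> j \<noteq> j' \<Longrightarrow> a j i = 0 \<or> a j' i = 0"
      by (auto simp: pw_disj_def ldisj_real_fun)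
    have "XL_n T n (\<Sum>j<r. a j) \<le> (\<Sum>j<r. XL_norm T (a j))" for n
      using aS by (intro order_trans[OF XL_n_sum] sum_mono XL_n_le_XL_norm) auto
    then have sumS: "(\<Sum>j<r. a j) \<in> XL_space T" by (rule XL_norm_le(2))
    have "(\<lambda>n. (\<Sum>j<r. XL_n T n (a j) powr q) powr (1 / q)) \<longlonglongrightarrow> (\<Sum>j<r. XL_norm T (a j) powr q) powr (1 / q)"
      using q aS by (auto intro!: tendsto_powr' tendsto_sum XL_n_tendsto always_eventually XL_n_nonneg sum_nonneg)
    moreover have "(\<Sum>j<r. XL_n T n (a j) powr q) powr (1 / q) \<le> M' * XL_norm T (\<Sum>j<r. a j)" for n
      using XL_n_lower_est[where M = M' and a = a and r = r, OF M'_est M'0 q ad, of n]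
        XL_n_le_XL_norm[OF sumS, of n] M'0
      by (meson mult_left_mono less_imp_le order_trans)
    ultimately show "(\<Sum>i<r. XL_norm T (a i) powr q) powr (1 / q) \<le> M' * XL_norm T (\<Sum>i<r. a i)"
      by (intro LIMSEQ_le_const2) auto
  qed
qed

text \<open>The first \<open>n\<close> entries of the witness are the normalised pieces \<open>x\<^sub>i \<le> \<bar>y\<^sub>i\<bar>\<close> from the
  room lemma, the remaining ones the disjoint family it leaves room for.\<close>

lemma Bn_dominated:
  assumes yd: "pw_disj n (y::nat \<Rightarrow> 'a)" and nz: "\<forall>i<n. y i \<noteq> 0"
  shows "\<exists>u\<in>Bn T N. \<forall>l<min n N. norm (y l) *\<^sub>R lat_abs (u l) \<le> 2 *\<^sub>R lat_abs (y l)"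
proof -
  obtain x z where x: "\<forall>i<n. 0 \<le> x i \<and> x i \<le> lat_abs (y i) \<and> norm (y i) \<le> 2 * norm (x i)"
    and z: "pos_disj_family N z" and xz: "\<forall>i<n. \<forall>j<N. inf (x i) (z j) = 0"
    using room_for_disjoint_family[OF infinite_dimensional, of "\<lambda>i. lat_abs (y i)" n N] by auto
  have x0: "x i \<noteq> 0" if "i < n" for i using x nz that by fastforce
  define v where "v l = (if l < n then x l else z l)" for l
  have "pos_disj_family N v"
    unfolding pos_disj_family_def
  proof (intro conjI allI impI)
    fix l assume "l < N"
    then show "0 \<le> v l" "v l \<noteq> 0" using x x0 z by (auto simp: v_def pos_disj_family_def)
  next
    fix l l' assume l: "l < N" "l' < N" "l \<noteq> l'"
    have "inf (lat_abs (y l)) (lat_abs (y l')) = 0" if "l < n" "l' < n"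
      using yd that l by (simp add: pw_disj_def ldisj_def)
    then show "inf (v l) (v l') = 0"
      using l x z xz inf_eq_zero_antimono2[of "x l" "lat_abs (y l)" "x l'" "lat_abs (y l')"]
      by (auto simp: v_def pos_disj_family_def inf_commute)
  qed
  then have "(\<lambda>l. (1 / norm (v l)) *\<^sub>R v l) \<in> Bn T N" (is "?u \<in> _")
    using Bn_normalize pos_disj_family_pw_disj by (auto simp: pos_disj_family_def)
  moreover have "norm (y l) *\<^sub>R lat_abs (?u l) \<le> 2 *\<^sub>R lat_abs (y l)" if "l < n" for l
  proof -
    have "norm (y l) *\<^sub>R lat_abs (?u l) = (norm (y l) / norm (x l)) *\<^sub>R x l"
      using x that by (simp add: v_def lat_abs_scaleR lat_abs_of_nonneg)
    also have "\<dots> \<le> 2 *\<^sub>R x l"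
      using x x0 that by (intro scaleR_right_mono_lattice) (auto simp: divide_le_eq)
    also have "\<dots> \<le> 2 *\<^sub>R lat_abs (y l)" using x that by (intro scaleR_mono_lattice) auto
    finally show ?thesis .
  qed
  ultimately show ?thesis by (auto intro!: bexI[of _ ?u])
qed

lemma XL_n_finite_seq_le:
  assumes yd: "pw_disj n (y::nat \<Rightarrow> 'a)" and nz: "\<forall>i<n. y i \<noteq> 0"
  shows "XL_n T N (\<lambda>l. if l < n then norm (y l) else 0) \<le> 2 * norm (\<Sum>i<n. y i)"
proof -
  define t where "t = (\<lambda>l. if l < n then norm (y l) else 0)"
  obtain u where u: "u \<in> Bn T N" and dom: "\<forall>l<min n N. norm (y l) *\<^sub>R lat_abs (u l) \<le> 2 *\<^sub>R lat_abs (y l)"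
    using Bn_dominated[OF yd nz] by blast
  have "lat_abs (\<Sum>l<N. t l *\<^sub>R u l) = (\<Sum>l<N. \<bar>t l\<bar> *\<^sub>R lat_abs (u l))"
    using u by (simp add: lat_abs_sum_scaleR Bn_def)
  also have "\<dots> \<le> (\<Sum>l<N. if l \<in> {..<n} then 2 *\<^sub>R lat_abs (y l) else 0)"
    using dom by (intro sum_mono_lattice) (auto simp: t_def)
  also have "\<dots> = (\<Sum>l\<in>{..<N} \<inter> {..<n}. 2 *\<^sub>R lat_abs (y l))"
    by (simp add: sum.inter_restrict)
  also have "\<dots> \<le> (\<Sum>l<n. 2 *\<^sub>R lat_abs (y l))"
    by (intro sum_mono2_lattice) (auto intro: scaleR_nonneg_lattice)
  also have "\<dots> = 2 *\<^sub>R lat_abs (\<Sum>i<n. y i)"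
    using lat_abs_sum_ldisj[of "{..<n}" y] yd by (simp add: pw_disj_def scaleR_sum_right)
  also have "\<dots> = lat_abs (2 *\<^sub>R (\<Sum>i<n. y i))" by (simp add: lat_abs_scaleR)
  finally have "norm (\<Sum>l<N. t l *\<^sub>R u l) \<le> 2 * norm (\<Sum>i<n. y i)"
    using norm_mono_lat_abs by fastforce
  then show ?thesis
    unfolding t_def[symmetric] using XL_n_le_Phi_n[of N t] Phi_n_le[OF u, of t] by linarith
qed

text \<open>Conversely, a lower estimate of \<open>X\<^sub>L\<close> applied to the unit sequences \<open>\<parallel>y\<^sub>i\<parallel> e\<^sub>i\<close> gives one
  for \<open>X\<close>, with constant doubled by \<open>XL_n_finite_seq_le\<close>.\<close>

lemma lower_est_of_XL:
  assumes est: "lower_est (XL_space T) (XL_norm T) q" and q: "1 \<le> q"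
  shows "lower_est (UNIV::'a set) norm q"
proof -
  obtain M where M: "\<And>n a. \<forall>i<n. a i \<in> XL_space T \<Longrightarrow> pw_disj n a \<Longrightarrow>
      (\<Sum>i<n. XL_norm T (a i) powr q) powr (1 / q) \<le> M * XL_norm T (\<Sum>i<n. a i)"
    using est unfolding lower_est_def by blast
  define M' where "M' = max M 0"
  show ?thesis
  proof (rule lower_est_nonzero[where M = "2 * M'"])
    fix n and y :: "nat \<Rightarrow> 'a" assume yd: "pw_disj n y" and nz: "\<forall>i<n. y i \<noteq> 0"
    define e where "e i = (\<lambda>l. if l = i then norm (y i) else 0)" for i
    have e_norm: "XL_norm T (e i) = norm (y i)" and eS: "e i \<in> XL_space T" for i
      unfolding e_def by (simp_all add: XL_norm_unit_seq)
    have "(\<Sum>i<n. e i) = (\<lambda>l. if l < n then norm (y l) else 0)"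
      unfolding e_def by (rule sum_unit_seqs)
    then have sum_le: "XL_norm T (\<Sum>i<n. e i) \<le> 2 * norm (\<Sum>i<n. y i)"
      using XL_n_finite_seq_le[OF yd nz] by (auto intro: XL_norm_le)
    have "pw_disj n e" by (auto simp: e_def pw_disj_def ldisj_real_fun)
    then have "(\<Sum>i<n. XL_norm T (e i) powr q) powr (1 / q) \<le> M * XL_norm T (\<Sum>i<n. e i)"
      using M eS by blast
    then have "(\<Sum>i<n. norm (y i) powr q) powr (1 / q) \<le> M * XL_norm T (\<Sum>i<n. e i)"
      by (simp only: e_norm)
    also have "\<dots> \<le> M' * (2 * norm (\<Sum>i<n. y i))"
      using sum_le XL_norm_nonneg[of "\<Sum>i<n. e i"] unfolding M'_def
      by (metis max.cobounded1 max.cobounded2 mult_mono order_trans)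
    finally show "(\<Sum>i<n. norm (y i) powr q) powr (1 / q) \<le> 2 * M' * norm (\<Sum>i<n. y i)"
      by simp
  qed
qed

end

theorem mainTheorem9:
  assumes "banach_lattice TYPE('a::{banach,lattice})"
    and "infinite_dimensional TYPE('a)"
  shows "delta_ind (XU_space TYPE('a)) (XU_norm TYPE('a)) = delta_ind (UNIV::'a set) norm
       \<and> sigma_ind (XL_space TYPE('a)) (XL_norm TYPE('a)) = sigma_ind (UNIV::'a set) norm"
proof -
  interpret inf_dim_banach_lattice "TYPE('a)" using assms by unfold_locales
  have "{ereal p | p. 1 \<le> p \<and> upper_est (XU_space TYPE('a)) (XU_norm TYPE('a)) p}
      = {ereal p | p. 1 \<le> p \<and> upper_est (UNIV::'a set) norm p}"
    using upper_est_XU upper_est_of_XU by blast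
  moreover have "{ereal q | q. 1 \<le> q \<and> lower_est (XL_space TYPE('a)) (XL_norm TYPE('a)) q}
      = {ereal q | q. 1 \<le> q \<and> lower_est (UNIV::'a set) norm q}"
    using lower_est_XL lower_est_of_XL by blast
  ultimately show ?thesis unfolding delta_ind_def sigma_ind_def by simp
qed

end
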